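(* There exist absolute constants $c>0$ and $C>0$ such that the following holds. Let $n\ge2$ be an integer and $L,B,\varepsilon>0$ with $\varepsilon\le LB^2/4$. Then for every PIFO algorithm $\mathcal{A}$ there exist a dimension $d\le C\big(1+B\sqrt{L/(n\varepsilon)}\big)$ and $n$ functions $f_1,\dots,f_n:\mathbb{R}^d\to\mathbb{R}$, each $L$-smooth and convex, such that $f=\frac1n\sum_i f_i$ has a minimizer $x^*$ with $\|x_0-x^*\|_2\le B$ ($x_0$ the initial point of $\mathcal{A}$), and the iterates of $\mathcal{A}$ run on $f_1,\dots,f_n$ satisfy $\mathbb{E} f(x_t)-f(x^* )\ge\varepsilon$ for all integers $0\le t\le c\big(n+B\sqrt{nL/\varepsilon}\big)$. That is, $\mathcal{A}$ needs $\Omega(n+B\sqrt{nL/\varepsilon})$ oracle queries to find $\hat x$ with $\mathbb{E} f(\hat x)-f(x^* )<\varepsilon$.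
   Context: A differentiable $g:\mathbb{R}^d\to\mathbb{R}$ is $L$-smooth if $\|\nabla g(x)-\nabla g(y)\|_2\le L\|x-y\|_2$ for all $x,y$. For $\gamma>0$, $\mathrm{prox}^{\gamma}_g(x)=\arg\min_u\{g(u)+\frac{1}{2\gamma}\|x-u\|_2^2\}$. PIFO algorithm: given $f_1,\dots,f_n:\mathbb{R}^d\to\mathbb{R}$ and $f=\frac1n\sum_i f_i$, a PIFO algorithm $\mathcal{A}$ is specified by a probability vector $(p_1,\dots,p_n)$ ($p_j\ge0$, $\sum_j p_j=1$), an initial point $x_0$ and parameters $\gamma_t>0$; it draws indices $i_1,i_2,\dots$ independently with $\mathbb{P}(i_t=j)=p_j$, at step $t\ge1$ queries the oracle $h_f(x_{t-1},i_t,\gamma_t)=[f_{i_t}(x_{t-1}),\nabla f_{i_t}(x_{t-1}),\mathrm{prox}^{\gamma_t}_{f_{i_t}}(x_{t-1})]$, and outputs an iterate $x_t\in\mathrm{span}\{x_0,\dots,x_{t-1},\nabla f_{i_1}(x_0),\dots,\nabla f_{i_t}(x_{t-1}),\mathrm{prox}^{\gamma_1}_{f_{i_1}}(x_0),\dots,\mathrm{prox}^{\gamma_t}_{f_{i_t}}(x_{t-1})\}$ (the choice within the span may depend on all previously observed information). Iterate $x_t$ uses $t$ oracle queries. *)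

theory Defs
  imports "HOL-Analysis.Analysis"
begin

text \<open>Vectors of R^d are represented as functions nat => real vanishing outside {..<d}.
  Indices of the component functions run over {..<n} (0-based).\<close>

type_synonym vec = "nat \<Rightarrow> real"

definition Rd :: "nat \<Rightarrow> vec set" where
  "Rd d = {x. \<forall>j\<ge>d. x j = 0}"

definition inner_d :: "nat \<Rightarrow> vec \<Rightarrow> vec \<Rightarrow> real" where
  "inner_d d x y = (\<Sum>j<d. x j * y j)"

definition norm_d :: "nat \<Rightarrow> vec \<Rightarrow> real" where
  "norm_d d x = sqrt (\<Sum>j<d. (x j)\<^sup>2)"

definition vadd :: "vec \<Rightarrow> vec \<Rightarrow> vec" where
  "vadd x y = (\<lambda>j. x j + y j)"

definition vsub :: "vec \<Rightarrow> vec \<Rightarrow> vec" where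
  "vsub x y = (\<lambda>j. x j - y j)"

definition vscale :: "real \<Rightarrow> vec \<Rightarrow> vec" where
  "vscale a x = (\<lambda>j. a * x j)"

definition vspan :: "vec set \<Rightarrow> vec set" where
  "vspan S = {v. \<exists>T a. finite T \<and> T \<subseteq> S \<and> v = (\<lambda>j. \<Sum>u\<in>T. a u * u j)}"

definition is_grad :: "nat \<Rightarrow> (vec \<Rightarrow> real) \<Rightarrow> vec \<Rightarrow> vec \<Rightarrow> bool" where
  "is_grad d f x g \<longleftrightarrow> g \<in> Rd d \<and>
     (\<forall>e>0. \<exists>\<delta>>0. \<forall>h\<in>Rd d. norm_d d h < \<delta> \<longrightarrow>
        \<bar>f (vadd x h) - f x - inner_d d g h\<bar> \<le> e * norm_d d h)"

definition grad :: "nat \<Rightarrow> (vec \<Rightarrow> real) \<Rightarrow> vec \<Rightarrow> vec" where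
  "grad d f x = (THE g. is_grad d f x g)"

definition differentiable_d :: "nat \<Rightarrow> (vec \<Rightarrow> real) \<Rightarrow> bool" where
  "differentiable_d d f \<longleftrightarrow> (\<forall>x\<in>Rd d. \<exists>g. is_grad d f x g)"

definition L_smooth :: "nat \<Rightarrow> real \<Rightarrow> (vec \<Rightarrow> real) \<Rightarrow> bool" where
  "L_smooth d L f \<longleftrightarrow> differentiable_d d f \<and>
     (\<forall>x\<in>Rd d. \<forall>y\<in>Rd d.
        norm_d d (vsub (grad d f x) (grad d f y)) \<le> L * norm_d d (vsub x y))"

definition convex_d :: "nat \<Rightarrow> (vec \<Rightarrow> real) \<Rightarrow> bool" where
  "convex_d d f \<longleftrightarrow> (\<forall>x\<in>Rd d. \<forall>y\<in>Rd d. \<forall>\<theta>::real. 0 \<le> \<theta> \<and> \<theta> \<le> 1 \<longrightarrow>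
      f (vadd (vscale \<theta> x) (vscale (1 - \<theta>) y)) \<le> \<theta> * f x + (1 - \<theta>) * f y)"

definition prox :: "nat \<Rightarrow> real \<Rightarrow> (vec \<Rightarrow> real) \<Rightarrow> vec \<Rightarrow> vec" where
  "prox d \<gamma> f x = (THE u. u \<in> Rd d \<and>
      (\<forall>v\<in>Rd d. f u + (norm_d d (vsub x u))\<^sup>2 / (2 * \<gamma>)
                 \<le> f v + (norm_d d (vsub x v))\<^sup>2 / (2 * \<gamma>)))"

definition is_minimizer :: "nat \<Rightarrow> (vec \<Rightarrow> real) \<Rightarrow> vec \<Rightarrow> bool" where
  "is_minimizer d f xs \<longleftrightarrow> xs \<in> Rd d \<and> (\<forall>y\<in>Rd d. f xs \<le> f y)"

text \<open>An observation of the oracle at step k: (i_k, f_{i_k}(x_{k-1}), grad f_{i_k}(x_{k-1}),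
  prox^{gamma_k}_{f_{i_k}}(x_{k-1})).\<close>
type_synonym obs = "nat \<times> real \<times> vec \<times> vec"

text \<open>A PIFO algorithm (for every input dimension d) consists of a probability vector
  p d over {..<n}, parameters gam d t > 0 (t >= 1), and a rule alg d mapping the observed
  history to the next iterate; x_t = alg d (history of length t), in particular x_0 = alg d [].\<close>
definition pifo_alg :: "nat \<Rightarrow> (nat \<Rightarrow> nat \<Rightarrow> real) \<Rightarrow> (nat \<Rightarrow> nat \<Rightarrow> real)
     \<Rightarrow> (nat \<Rightarrow> obs list \<Rightarrow> vec) \<Rightarrow> bool" where
  "pifo_alg n p gam alg \<longleftrightarrow>
     (\<forall>d. (\<forall>j<n. 0 \<le> p d j) \<and> (\<Sum>j<n. p d j) = 1 \<and> (\<forall>t\<ge>1. 0 < gam d t) \<and>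
          alg d [] \<in> Rd d \<and>
          (\<forall>h. h \<noteq> [] \<longrightarrow>
             alg d h \<in> vspan ({alg d (take k h) | k. k < length h}
                              \<union> {fst (snd (snd (h ! k))) | k. k < length h}
                              \<union> {snd (snd (snd (h ! k))) | k. k < length h})))"

definition hist_step :: "nat \<Rightarrow> (nat \<Rightarrow> vec \<Rightarrow> real) \<Rightarrow> (nat \<Rightarrow> nat \<Rightarrow> real)
     \<Rightarrow> (nat \<Rightarrow> obs list \<Rightarrow> vec) \<Rightarrow> obs list \<Rightarrow> nat \<Rightarrow> obs list" where
  "hist_step d F gam alg h i =
     (let x = alg d h; t = Suc (length h)
      in h @ [(i, F i x, grad d (F i) x, prox d (gam d t) (F i) x)])"

definition run_hist :: "nat \<Rightarrow> (nat \<Rightarrow> vec \<Rightarrow> real) \<Rightarrow> (nat \<Rightarrow> nat \<Rightarrow> real)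
     \<Rightarrow> (nat \<Rightarrow> obs list \<Rightarrow> vec) \<Rightarrow> nat list \<Rightarrow> obs list" where
  "run_hist d F gam alg s = foldl (hist_step d F gam alg) [] s"

definition iterate :: "nat \<Rightarrow> (nat \<Rightarrow> vec \<Rightarrow> real) \<Rightarrow> (nat \<Rightarrow> nat \<Rightarrow> real)
     \<Rightarrow> (nat \<Rightarrow> obs list \<Rightarrow> vec) \<Rightarrow> nat list \<Rightarrow> vec" where
  "iterate d F gam alg s = alg d (run_hist d F gam alg s)"

definition expect_iter :: "nat \<Rightarrow> nat \<Rightarrow> (nat \<Rightarrow> nat \<Rightarrow> real) \<Rightarrow> (nat \<Rightarrow> vec \<Rightarrow> real)
     \<Rightarrow> (nat \<Rightarrow> nat \<Rightarrow> real) \<Rightarrow> (nat \<Rightarrow> obs list \<Rightarrow> vec) \<Rightarrow> (vec \<Rightarrow> real) \<Rightarrow> nat \<Rightarrow> real" where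
  "expect_iter n d p F gam alg g t =
     (\<Sum>s\<in>{s. length s = t \<and> set s \<subseteq> {..<n}}.
        (\<Prod>k<t. p d (s ! k)) * g (iterate d F gam alg s))"

definition avg_fun :: "nat \<Rightarrow> (nat \<Rightarrow> vec \<Rightarrow> real) \<Rightarrow> vec \<Rightarrow> real" where
  "avg_fun n F x = (\<Sum>i<n. F i x) / real n"

end

theory Submission
  imports Defs
begin

text \<open>The hard instance is a chain of quadratic links \<open>\<langle>U (r-1) - U r, x\<rangle>\<^sup>2\<close> along an orthonormal
  family \<open>U 0, \<dots>, U (k-1)\<close> orthogonal to \<open>x0\<close>, with the even links given to the component \<open>f i0\<close>,
  the odd links to \<open>f i1\<close>, and all other components zero; \<open>i0, i1\<close> are the two indices with the
  smallest sampling probabilities, so \<open>p i0 + p i1 \<le> 2/n\<close>. All components are least-squares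
  functions over orthogonal families, so their gradients and proximal points lie in the span of the
  query point and of the links with nonzero residual: a query of \<open>f i0\<close> or \<open>f i1\<close> discovers at most
  one new link, and other queries discover none. As long as the last link is undiscovered the
  residuals telescope, giving \<open>f x - f x* \<ge> L B\<^sup>2 / (4 n k\<^sup>2)\<close>, while the expected number of
  discovering queries among \<open>t\<close> is \<open>t (p i0 + p i1) \<le> 2t/n\<close>. Taking \<open>k \<approx> B \<surd>(L/(n\<epsilon>)) / 3\<close>
  gives the bound; when this is below \<open>1\<close>, a single link in \<open>\<real>\<^sup>2\<close> with a large offset on the least
  likely component does the job.\<close>

section \<open>Euclidean structure of \<open>Rd d\<close>\<close>

lemma inner_d_commute: "inner_d d x y = inner_d d y x"
  unfolding inner_d_def by (simp add: mult.commute)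

lemma inner_d_sum_left:
  "inner_d d (\<lambda>j. \<Sum>r\<in>T. c r * v r j) y = (\<Sum>r\<in>T. c r * inner_d d (v r) y)"
  unfolding inner_d_def
  by (simp add: sum_distrib_left sum_distrib_right mult.assoc sum.swap[of _ T])

lemma inner_d_sum_right:
  "inner_d d y (\<lambda>j. \<Sum>r\<in>T. c r * v r j) = (\<Sum>r\<in>T. c r * inner_d d y (v r))"
  by (simp add: inner_d_commute[of d y] inner_d_sum_left)

lemma inner_d_diff_left: "inner_d d (\<lambda>j. x j - y j) z = inner_d d x z - inner_d d y z"
  unfolding inner_d_def by (simp add: left_diff_distrib sum_subtractf)

lemma inner_d_scale_left: "inner_d d (\<lambda>j. a * x j) z = a * inner_d d x z"
  unfolding inner_d_def by (simp add: sum_distrib_left mult.assoc)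

lemma inner_d_add_right: "inner_d d z (\<lambda>j. x j + y j) = inner_d d z x + inner_d d z y"
  unfolding inner_d_def by (simp add: distrib_left sum.distrib)

lemma inner_d_diff_right: "inner_d d z (\<lambda>j. x j - y j) = inner_d d z x - inner_d d z y"
  unfolding inner_d_def by (simp add: right_diff_distrib sum_subtractf)

lemma inner_d_scale_right: "inner_d d z (\<lambda>j. a * x j) = a * inner_d d z x"
  unfolding inner_d_def by (simp add: sum_distrib_left mult.left_commute)

lemma inner_d_self_nonneg: "0 \<le> inner_d d x x"
  unfolding inner_d_def by (simp add: sum_nonneg)

lemma norm_d_nonneg: "0 \<le> norm_d d x"
  unfolding norm_d_def by (simp add: sum_nonneg)

lemma norm_d_power2: "(norm_d d x)\<^sup>2 = inner_d d x x"
  unfolding norm_d_def inner_d_def by (simp add: sum_nonneg power2_eq_square)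

lemma norm_d_eq_sqrt_inner: "norm_d d x = sqrt (inner_d d x x)"
  by (metis norm_d_nonneg norm_d_power2 real_sqrt_unique)

lemma norm_d_scale: "norm_d d (\<lambda>j. a * x j) = \<bar>a\<bar> * norm_d d x"
proof -
  have "norm_d d (\<lambda>j. a * x j) = sqrt (a\<^sup>2 * inner_d d x x)"
    by (simp add: norm_d_eq_sqrt_inner inner_d_scale_left inner_d_scale_right power2_eq_square)
  then show ?thesis by (simp add: real_sqrt_mult norm_d_eq_sqrt_inner)
qed

lemma inner_d_self_eq_0_imp_zero:
  assumes "inner_d d x x = 0" and "j < d"
  shows "x j = 0"
proof -
  have "\<forall>i\<in>{..<d}. x i * x i = 0"
    using assms(1) unfolding inner_d_def by (subst sum_nonneg_eq_0_iff[symmetric]) auto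
  with assms(2) show ?thesis by auto
qed

lemma inner_d_self_eq_0_imp_orthogonal: "inner_d d x x = 0 \<Longrightarrow> inner_d d x y = 0"
  using inner_d_self_eq_0_imp_zero[of d x] unfolding inner_d_def by simp

lemma Rd_eqI:
  assumes "x \<in> Rd d" "y \<in> Rd d" "inner_d d (\<lambda>j. x j - y j) (\<lambda>j. x j - y j) = 0"
  shows "x = y"
proof
  fix j show "x j = y j"
    using assms inner_d_self_eq_0_imp_zero[OF assms(3), of j] unfolding Rd_def
    by (cases "j < d") auto
qed

lemma Rd_sum: "(\<And>r. r \<in> T \<Longrightarrow> v r \<in> Rd d) \<Longrightarrow> (\<lambda>j. \<Sum>r\<in>T. c r * v r j) \<in> Rd d"
  unfolding Rd_def by auto

lemma Rd_diff: "x \<in> Rd d \<Longrightarrow> y \<in> Rd d \<Longrightarrow> (\<lambda>j. x j - y j) \<in> Rd d"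
  unfolding Rd_def by auto

lemma Rd_add: "x \<in> Rd d \<Longrightarrow> y \<in> Rd d \<Longrightarrow> (\<lambda>j. x j + y j) \<in> Rd d"
  unfolding Rd_def by auto

lemma Rd_scale: "x \<in> Rd d \<Longrightarrow> (\<lambda>j. a * x j) \<in> Rd d"
  unfolding Rd_def by auto

section \<open>Least-squares functions over orthogonal families\<close>

definition orthogonal_family :: "nat \<Rightarrow> nat set \<Rightarrow> (nat \<Rightarrow> vec) \<Rightarrow> real \<Rightarrow> bool" where
  "orthogonal_family d R a \<beta> \<longleftrightarrow> finite R \<and> 0 \<le> \<beta> \<and>
     (\<forall>r\<in>R. a r \<in> Rd d \<and> inner_d d (a r) (a r) \<le> \<beta>) \<and>
     (\<forall>r\<in>R. \<forall>s\<in>R. r \<noteq> s \<longrightarrow> inner_d d (a r) (a s) = 0)"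

lemma orthogonal_family_inner_sum:
  assumes fam: "orthogonal_family d R a \<beta>" and r: "r \<in> R"
  shows "(\<Sum>s\<in>R. c s * inner_d d (a r) (a s)) = c r * inner_d d (a r) (a r)"
proof -
  have "finite R" using fam unfolding orthogonal_family_def by auto
  then have "(\<Sum>s\<in>R. c s * inner_d d (a r) (a s))
      = c r * inner_d d (a r) (a r) + (\<Sum>s\<in>R - {r}. c s * inner_d d (a r) (a s))"
    using r by (simp add: sum.remove)
  also have "(\<Sum>s\<in>R - {r}. c s * inner_d d (a r) (a s)) = 0"
    using fam r unfolding orthogonal_family_def by (intro sum.neutral) auto
  finally show ?thesis by simp
qed

lemma orthogonal_family_norm_sum:
  assumes "orthogonal_family d R a \<beta>"
  shows "inner_d d (\<lambda>j. \<Sum>r\<in>R. c r * a r j) (\<lambda>j. \<Sum>r\<in>R. c r * a r j)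
       = (\<Sum>r\<in>R. (c r)\<^sup>2 * inner_d d (a r) (a r))"
  by (simp add: inner_d_sum_left inner_d_sum_right orthogonal_family_inner_sum[OF assms]
      power2_eq_square mult.assoc cong: sum.cong)

lemma orthogonal_family_bessel:
  assumes fam: "orthogonal_family d R a \<beta>"
  shows "(\<Sum>r\<in>R. (inner_d d (a r) h)\<^sup>2) \<le> \<beta> * inner_d d h h"
proof -
  define w where "w r = inner_d d (a r) h / inner_d d (a r) (a r)" for r
  define P where "P = (\<lambda>j. \<Sum>r\<in>R. w r * a r j)"
  define S where "S = (\<Sum>r\<in>R. (inner_d d (a r) h)\<^sup>2 / inner_d d (a r) (a r))"
  have hP: "inner_d d h P = S"
    unfolding P_def S_def inner_d_sum_right
    by (simp add: w_def inner_d_commute[of d h] power2_eq_square)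
  have PP: "inner_d d P P = S"
    unfolding P_def S_def orthogonal_family_norm_sum[OF fam] w_def
    by (intro sum.cong) (simp_all add: power2_eq_square)
  have "0 \<le> inner_d d (\<lambda>j. h j - P j) (\<lambda>j. h j - P j)" by (rule inner_d_self_nonneg)
  also have "\<dots> = inner_d d h h - 2 * inner_d d h P + inner_d d P P"
    by (simp add: inner_d_diff_left inner_d_diff_right inner_d_commute[of d P h])
  finally have S_le: "S \<le> inner_d d h h" using hP PP by simp
  have "(inner_d d (a r) h)\<^sup>2 \<le> \<beta> * ((inner_d d (a r) h)\<^sup>2 / inner_d d (a r) (a r))"
    if r: "r \<in> R" for r
  proof (cases "inner_d d (a r) (a r) = 0")
    case True then show ?thesis using inner_d_self_eq_0_imp_orthogonal by simp
  next
    case False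
    then have pos: "0 < inner_d d (a r) (a r)" using inner_d_self_nonneg[of d "a r"] by simp
    have "inner_d d (a r) (a r) \<le> \<beta>" using fam r unfolding orthogonal_family_def by auto
    with pos show ?thesis by (simp add: field_simps mult_right_mono)
  qed
  then have "(\<Sum>r\<in>R. (inner_d d (a r) h)\<^sup>2) \<le> \<beta> * S"
    unfolding S_def sum_distrib_left by (rule sum_mono)
  also have "\<dots> \<le> \<beta> * inner_d d h h"
    using S_le fam unfolding orthogonal_family_def by (simp add: mult_left_mono)
  finally show ?thesis .
qed

definition lsq :: "nat \<Rightarrow> real \<Rightarrow> nat set \<Rightarrow> (nat \<Rightarrow> vec) \<Rightarrow> (nat \<Rightarrow> real) \<Rightarrow> vec \<Rightarrow> real" where
  "lsq d \<mu> R a b x = \<mu> / 2 * (\<Sum>r\<in>R. (inner_d d (a r) x - b r)\<^sup>2)"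

definition lsq_grad :: "nat \<Rightarrow> real \<Rightarrow> nat set \<Rightarrow> (nat \<Rightarrow> vec) \<Rightarrow> (nat \<Rightarrow> real) \<Rightarrow> vec \<Rightarrow> vec" where
  "lsq_grad d \<mu> R a b x = (\<lambda>j. \<Sum>r\<in>R. (\<mu> * (inner_d d (a r) x - b r)) * a r j)"

text \<open>For an orthogonal family the proximal problem decouples along the directions \<open>a r\<close>;
  in each of them it is a one-dimensional quadratic problem.\<close>
definition lsq_prox :: "nat \<Rightarrow> real \<Rightarrow> nat set \<Rightarrow> (nat \<Rightarrow> vec) \<Rightarrow> (nat \<Rightarrow> real) \<Rightarrow> real \<Rightarrow> vec \<Rightarrow> vec" where
  "lsq_prox d \<mu> R a b \<gamma> x = (\<lambda>j. x j - (\<Sum>r\<in>R.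
      \<mu> * \<gamma> * (inner_d d (a r) x - b r) / (1 + \<mu> * \<gamma> * inner_d d (a r) (a r)) * a r j))"

lemma lsq_nonneg: "0 \<le> \<mu> \<Longrightarrow> 0 \<le> lsq d \<mu> R a b x"
  unfolding lsq_def by (simp add: sum_nonneg)

lemma lsq_add:
  "lsq d \<mu> R a b (\<lambda>j. x j + h j) = lsq d \<mu> R a b x + inner_d d (lsq_grad d \<mu> R a b x) h
     + \<mu> / 2 * (\<Sum>r\<in>R. (inner_d d (a r) h)\<^sup>2)"
proof -
  have "(\<Sum>r\<in>R. (inner_d d (a r) (\<lambda>j. x j + h j) - b r)\<^sup>2)
      = (\<Sum>r\<in>R. (inner_d d (a r) x - b r)\<^sup>2
           + 2 * ((inner_d d (a r) x - b r) * inner_d d (a r) h) + (inner_d d (a r) h)\<^sup>2)"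
    by (simp add: inner_d_add_right power2_eq_square algebra_simps)
  also have "\<dots> = (\<Sum>r\<in>R. (inner_d d (a r) x - b r)\<^sup>2)
        + 2 * (\<Sum>r\<in>R. (inner_d d (a r) x - b r) * inner_d d (a r) h)
        + (\<Sum>r\<in>R. (inner_d d (a r) h)\<^sup>2)"
    by (simp add: sum.distrib sum_distrib_left)
  finally have expand: "(\<Sum>r\<in>R. (inner_d d (a r) (\<lambda>j. x j + h j) - b r)\<^sup>2) = \<dots>" .
  have "inner_d d (lsq_grad d \<mu> R a b x) h
      = \<mu> * (\<Sum>r\<in>R. (inner_d d (a r) x - b r) * inner_d d (a r) h)"
    unfolding lsq_grad_def inner_d_sum_left by (simp add: sum_distrib_left mult.assoc)
  with expand show ?thesis unfolding lsq_def by (simp add: algebra_simps)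
qed

lemma lsq_grad_in_Rd: "orthogonal_family d R a \<beta> \<Longrightarrow> lsq_grad d \<mu> R a b x \<in> Rd d"
  unfolding lsq_grad_def orthogonal_family_def by (rule Rd_sum) auto

lemma lsq_prox_in_Rd: "orthogonal_family d R a \<beta> \<Longrightarrow> x \<in> Rd d \<Longrightarrow> lsq_prox d \<mu> R a b \<gamma> x \<in> Rd d"
  unfolding lsq_prox_def orthogonal_family_def by (intro Rd_diff Rd_sum) auto

lemma is_grad_diff_small:
  assumes g1: "is_grad d f x g1" and g2: "is_grad d f x g2" and e: "0 < e"
  shows "\<exists>\<delta>>0. \<forall>h\<in>Rd d. norm_d d h < \<delta> \<longrightarrow>
           \<bar>inner_d d (\<lambda>j. g1 j - g2 j) h\<bar> \<le> 2 * e * norm_d d h"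
proof -
  obtain \<delta>1 where "0 < \<delta>1" and H1: "\<And>h. h \<in> Rd d \<Longrightarrow> norm_d d h < \<delta>1 \<Longrightarrow>
      \<bar>f (vadd x h) - f x - inner_d d g1 h\<bar> \<le> e * norm_d d h"
    using g1 e unfolding is_grad_def by blast
  obtain \<delta>2 where "0 < \<delta>2" and H2: "\<And>h. h \<in> Rd d \<Longrightarrow> norm_d d h < \<delta>2 \<Longrightarrow>
      \<bar>f (vadd x h) - f x - inner_d d g2 h\<bar> \<le> e * norm_d d h"
    using g2 e unfolding is_grad_def by blast
  have "\<bar>inner_d d (\<lambda>j. g1 j - g2 j) h\<bar> \<le> 2 * e * norm_d d h"
    if "h \<in> Rd d" "norm_d d h < min \<delta>1 \<delta>2" for h
    using H1[of h] H2[of h] that unfolding inner_d_diff_left by auto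
  with \<open>0 < \<delta>1\<close> \<open>0 < \<delta>2\<close> show ?thesis by (intro exI[of _ "min \<delta>1 \<delta>2"]) auto
qed

lemma is_grad_unique:
  assumes g1: "is_grad d f x g1" and g2: "is_grad d f x g2"
  shows "g1 = g2"
proof (rule ccontr)
  assume "g1 \<noteq> g2"
  define w where "w = (\<lambda>j. g1 j - g2 j)"
  define N where "N = sqrt (inner_d d w w)"
  have "g1 \<in> Rd d" "g2 \<in> Rd d" using g1 g2 unfolding is_grad_def by auto
  with \<open>g1 \<noteq> g2\<close> have "inner_d d w w \<noteq> 0" unfolding w_def using Rd_eqI by blast
  then have N: "0 < N" unfolding N_def using inner_d_self_nonneg[of d w] by simp
  have wR: "w \<in> Rd d" unfolding w_def using \<open>g1 \<in> Rd d\<close> \<open>g2 \<in> Rd d\<close> by (rule Rd_diff)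
  obtain \<delta> where "0 < \<delta>" and small: "\<And>h. h \<in> Rd d \<Longrightarrow> norm_d d h < \<delta> \<Longrightarrow>
      \<bar>inner_d d w h\<bar> \<le> 2 * (N / 4) * norm_d d h"
    using is_grad_diff_small[OF g1 g2, of "N / 4"] N unfolding w_def by auto
  define s where "s = \<delta> / (2 * N)"
  have s: "0 < s" unfolding s_def using \<open>0 < \<delta>\<close> N by simp
  have norm_h: "norm_d d (\<lambda>j. s * w j) = s * N"
    using s unfolding norm_d_scale N_def norm_d_eq_sqrt_inner by simp
  have "s * N < \<delta>" unfolding s_def using N \<open>0 < \<delta>\<close> by simp
  then have "\<bar>inner_d d w (\<lambda>j. s * w j)\<bar> \<le> N / 2 * (s * N)"
    using small[OF Rd_scale[OF wR], of s] norm_h by simp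
  moreover have "inner_d d w (\<lambda>j. s * w j) = s * N\<^sup>2"
    unfolding inner_d_scale_right N_def using inner_d_self_nonneg[of d w] by simp
  ultimately have "s * N\<^sup>2 \<le> s * (N\<^sup>2 / 2)" using s by (simp add: power2_eq_square algebra_simps)
  with s N show False by simp
qed

lemma grad_eqI: "is_grad d f x g \<Longrightarrow> grad d f x = g"
  unfolding grad_def using is_grad_unique by blast

lemma lsq_is_grad:
  assumes fam: "orthogonal_family d R a \<beta>" and \<mu>: "0 \<le> \<mu>"
  shows "is_grad d (lsq d \<mu> R a b) x (lsq_grad d \<mu> R a b x)"
  unfolding is_grad_def
proof (intro conjI allI impI)
  show "lsq_grad d \<mu> R a b x \<in> Rd d" by (rule lsq_grad_in_Rd[OF fam])
  fix e :: real assume e: "0 < e"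
  define K where "K = \<mu> * \<beta> / 2 + 1"
  have "0 \<le> \<beta>" using fam unfolding orthogonal_family_def by auto
  with \<mu> have "0 \<le> \<mu> * \<beta>" by simp
  then have K: "0 < K" "\<mu> / 2 * \<beta> \<le> K" unfolding K_def by auto
  show "\<exists>\<delta>>0. \<forall>h\<in>Rd d. norm_d d h < \<delta> \<longrightarrow> \<bar>lsq d \<mu> R a b (vadd x h) - lsq d \<mu> R a b x
          - inner_d d (lsq_grad d \<mu> R a b x) h\<bar> \<le> e * norm_d d h"
  proof (intro exI conjI ballI impI)
    show "0 < e / K" using e K by simp
    fix h assume "h \<in> Rd d" and h: "norm_d d h < e / K"
    have "\<bar>lsq d \<mu> R a b (vadd x h) - lsq d \<mu> R a b x - inner_d d (lsq_grad d \<mu> R a b x) h\<bar>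
        = \<mu> / 2 * (\<Sum>r\<in>R. (inner_d d (a r) h)\<^sup>2)"
      unfolding vadd_def lsq_add using \<mu> by (simp add: sum_nonneg)
    also have "\<dots> \<le> \<mu> / 2 * \<beta> * (norm_d d h)\<^sup>2"
      using orthogonal_family_bessel[OF fam, of h] \<mu>
      by (simp add: norm_d_power2 mult.assoc mult_left_mono)
    also have "\<dots> \<le> K * (norm_d d h)\<^sup>2"
      using K by (intro mult_right_mono) auto
    also have "\<dots> \<le> K * (e / K * norm_d d h)"
      unfolding power2_eq_square
      using h K norm_d_nonneg[of d h] by (intro mult_left_mono mult_right_mono) auto
    finally show "\<bar>lsq d \<mu> R a b (vadd x h) - lsq d \<mu> R a b x
        - inner_d d (lsq_grad d \<mu> R a b x) h\<bar> \<le> e * norm_d d h"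
      using K by simp
  qed
qed

lemma grad_lsq:
  "orthogonal_family d R a \<beta> \<Longrightarrow> 0 \<le> \<mu> \<Longrightarrow> grad d (lsq d \<mu> R a b) x = lsq_grad d \<mu> R a b x"
  by (rule grad_eqI[OF lsq_is_grad])

lemma L_smooth_lsq:
  assumes fam: "orthogonal_family d R a \<beta>" and \<mu>: "0 \<le> \<mu>" and L: "\<mu> * \<beta> \<le> L"
  shows "L_smooth d L (lsq d \<mu> R a b)"
  unfolding L_smooth_def differentiable_d_def
proof (intro conjI ballI)
  show "\<exists>g. is_grad d (lsq d \<mu> R a b) x g" for x using lsq_is_grad[OF fam \<mu>] by blast
  fix x y
  have \<beta>: "0 \<le> \<beta>" using fam unfolding orthogonal_family_def by auto
  define h where "h = vsub x y"
  have diff: "vsub (grad d (lsq d \<mu> R a b) x) (grad d (lsq d \<mu> R a b) y)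
      = (\<lambda>j. \<Sum>r\<in>R. (\<mu> * inner_d d (a r) h) * a r j)"
    unfolding grad_lsq[OF fam \<mu>] lsq_grad_def vsub_def h_def
    by (auto simp: inner_d_diff_right algebra_simps intro!: sum.cong simp flip: sum_subtractf)
  have "(norm_d d (vsub (grad d (lsq d \<mu> R a b) x) (grad d (lsq d \<mu> R a b) y)))\<^sup>2
      = (\<Sum>r\<in>R. (\<mu> * inner_d d (a r) h)\<^sup>2 * inner_d d (a r) (a r))"
    unfolding diff norm_d_power2 orthogonal_family_norm_sum[OF fam] ..
  also have "\<dots> \<le> (\<Sum>r\<in>R. (\<mu> * inner_d d (a r) h)\<^sup>2 * \<beta>)"
    using fam unfolding orthogonal_family_def by (intro sum_mono mult_left_mono) auto
  also have "\<dots> = \<mu>\<^sup>2 * \<beta> * (\<Sum>r\<in>R. (inner_d d (a r) h)\<^sup>2)"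
    by (simp add: sum_distrib_left power_mult_distrib algebra_simps)
  also have "\<dots> \<le> \<mu>\<^sup>2 * \<beta> * (\<beta> * inner_d d h h)"
    using orthogonal_family_bessel[OF fam] \<beta> by (intro mult_left_mono) auto
  also have "\<dots> = (\<mu> * \<beta> * norm_d d h)\<^sup>2"
    by (simp only: power_mult_distrib norm_d_power2) (simp add: power2_eq_square)
  also have "\<dots> \<le> (L * norm_d d h)\<^sup>2"
    using L \<mu> \<beta> norm_d_nonneg[of d h] by (intro power_mono mult_right_mono) auto
  finally show "norm_d d (vsub (grad d (lsq d \<mu> R a b) x) (grad d (lsq d \<mu> R a b) y))
      \<le> L * norm_d d (vsub x y)"
    unfolding h_def
  proof (rule power2_le_imp_le)
    have "0 \<le> \<mu> * \<beta>" using \<mu> \<beta> by simp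
    then show "0 \<le> L * norm_d d (vsub x y)" using L norm_d_nonneg[of d "vsub x y"] by simp
  qed
qed

lemma power2_convex_combination:
  fixes \<theta> p q :: real
  assumes "0 \<le> \<theta>" "\<theta> \<le> 1"
  shows "(\<theta> * p + (1 - \<theta>) * q)\<^sup>2 \<le> \<theta> * p\<^sup>2 + (1 - \<theta>) * q\<^sup>2"
proof -
  have "\<theta> * p\<^sup>2 + (1 - \<theta>) * q\<^sup>2 - (\<theta> * p + (1 - \<theta>) * q)\<^sup>2 = \<theta> * (1 - \<theta>) * (p - q)\<^sup>2"
    by (simp add: power2_eq_square algebra_simps)
  moreover have "0 \<le> \<theta> * (1 - \<theta>) * (p - q)\<^sup>2" using assms by simp
  ultimately show ?thesis by linarith
qed

lemma convex_lsq:
  assumes \<mu>: "0 \<le> \<mu>"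
  shows "convex_d d (lsq d \<mu> R a b)"
  unfolding convex_d_def
proof (intro ballI allI impI)
  fix x y \<theta> assume \<theta>: "0 \<le> \<theta> \<and> \<theta> \<le> (1::real)"
  define z where "z = vadd (vscale \<theta> x) (vscale (1 - \<theta>) y)"
  have "(inner_d d (a r) z - b r)\<^sup>2
      \<le> \<theta> * (inner_d d (a r) x - b r)\<^sup>2 + (1 - \<theta>) * (inner_d d (a r) y - b r)\<^sup>2" for r
  proof -
    have "inner_d d (a r) z - b r
        = \<theta> * (inner_d d (a r) x - b r) + (1 - \<theta>) * (inner_d d (a r) y - b r)"
      unfolding z_def vadd_def vscale_def inner_d_add_right inner_d_scale_right
      by (simp add: algebra_simps)
    with \<theta> show ?thesis by (simp add: power2_convex_combination)
  qed
  then have "(\<Sum>r\<in>R. (inner_d d (a r) z - b r)\<^sup>2)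
      \<le> \<theta> * (\<Sum>r\<in>R. (inner_d d (a r) x - b r)\<^sup>2) + (1 - \<theta>) * (\<Sum>r\<in>R. (inner_d d (a r) y - b r)\<^sup>2)"
    by (simp add: sum_distrib_left sum_mono flip: sum.distrib)
  from mult_left_mono[OF this, of "\<mu> / 2"] \<mu>
  show "lsq d \<mu> R a b z \<le> \<theta> * lsq d \<mu> R a b x + (1 - \<theta>) * lsq d \<mu> R a b y"
    unfolding lsq_def by (simp add: distrib_left mult.left_commute)
qed

lemma lsq_grad_at_prox:
  assumes fam: "orthogonal_family d R a \<beta>" and \<mu>: "0 \<le> \<mu>" and \<gamma>: "0 < \<gamma>"
  shows "lsq_grad d \<mu> R a b (lsq_prox d \<mu> R a b \<gamma> x)
       = (\<lambda>j. (x j - lsq_prox d \<mu> R a b \<gamma> x j) / \<gamma>)"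
proof
  fix j
  define c where "c r = \<mu> * \<gamma> * (inner_d d (a r) x - b r) / (1 + \<mu> * \<gamma> * inner_d d (a r) (a r))"
    for r
  define u where "u = lsq_prox d \<mu> R a b \<gamma> x"
  have u: "u = (\<lambda>j. x j - (\<Sum>r\<in>R. c r * a r j))" unfolding u_def lsq_prox_def c_def ..
  have "\<mu> * (inner_d d (a r) u - b r) = c r / \<gamma>" if r: "r \<in> R" for r
  proof -
    have "inner_d d (a r) u = inner_d d (a r) x - c r * inner_d d (a r) (a r)"
      unfolding u inner_d_diff_right inner_d_sum_right orthogonal_family_inner_sum[OF fam r] ..
    moreover have "0 < 1 + \<mu> * \<gamma> * inner_d d (a r) (a r)"
      using \<mu> \<gamma> inner_d_self_nonneg[of d "a r"] by (simp add: add_pos_nonneg)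
    ultimately have "\<mu> * (inner_d d (a r) u - b r)
        = \<mu> * (inner_d d (a r) x - b r) / (1 + \<mu> * \<gamma> * inner_d d (a r) (a r))"
      unfolding c_def by (simp add: field_simps)
    with \<gamma> show ?thesis unfolding c_def by simp
  qed
  then have "lsq_grad d \<mu> R a b u j = (\<Sum>r\<in>R. c r / \<gamma> * a r j)"
    unfolding lsq_grad_def by (intro sum.cong) auto
  also have "\<dots> = (x j - u j) / \<gamma>" unfolding u by (simp add: sum_divide_distrib)
  finally show "lsq_grad d \<mu> R a b u j = (x j - u j) / \<gamma>" .
qed

text \<open>\<open>lsq_prox\<close> is the stationary point of the \<open>1/\<gamma>\<close>-strongly convex proximal objective,
  whence this quadratic growth.\<close>
lemma lsq_prox_growth:
  fixes x :: vec and b :: "nat \<Rightarrow> real"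
  assumes fam: "orthogonal_family d R a \<beta>" and \<mu>: "0 \<le> \<mu>" and \<gamma>: "0 < \<gamma>"
  defines "u \<equiv> lsq_prox d \<mu> R a b \<gamma> x"
  shows "lsq d \<mu> R a b u + (norm_d d (vsub x u))\<^sup>2 / (2 * \<gamma>) + inner_d d (vsub v u) (vsub v u) / (2 * \<gamma>)
       \<le> lsq d \<mu> R a b v + (norm_d d (vsub x v))\<^sup>2 / (2 * \<gamma>)"
proof -
  define w where "w = vsub x u"
  define h where "h = vsub v u"
  have v: "v = (\<lambda>j. u j + h j)" unfolding h_def vsub_def by simp
  have "inner_d d (lsq_grad d \<mu> R a b u) h = inner_d d w h / \<gamma>"
    unfolding u_def lsq_grad_at_prox[OF fam \<mu> \<gamma>] w_def vsub_def
    using inner_d_scale_left[of d "1 / \<gamma>"] by simp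
  moreover have "0 \<le> \<mu> / 2 * (\<Sum>r\<in>R. (inner_d d (a r) h)\<^sup>2)" using \<mu> by (simp add: sum_nonneg)
  ultimately have "lsq d \<mu> R a b u + inner_d d w h / \<gamma> \<le> lsq d \<mu> R a b v"
    unfolding v lsq_add by linarith
  moreover have "vsub x v = (\<lambda>j. w j - h j)" unfolding vsub_def w_def v by auto
  then have "(norm_d d (vsub x v))\<^sup>2 = inner_d d w w - 2 * inner_d d w h + inner_d d h h"
    by (simp add: norm_d_power2 inner_d_diff_left inner_d_diff_right inner_d_commute[of d h w])
  moreover have "(norm_d d (vsub x u))\<^sup>2 = inner_d d w w" unfolding norm_d_power2 w_def ..
  moreover have "(inner_d d w w - 2 * inner_d d w h + inner_d d h h) / (2 * \<gamma>)
      = inner_d d w w / (2 * \<gamma>) + inner_d d h h / (2 * \<gamma>) - inner_d d w h / \<gamma>"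
    using \<gamma> by (simp add: field_simps)
  ultimately show ?thesis unfolding h_def[symmetric] by (simp only:)
qed

lemma prox_lsq:
  assumes fam: "orthogonal_family d R a \<beta>" and \<mu>: "0 \<le> \<mu>" and \<gamma>: "0 < \<gamma>" and x: "x \<in> Rd d"
  shows "prox d \<gamma> (lsq d \<mu> R a b) x = lsq_prox d \<mu> R a b \<gamma> x"
  unfolding prox_def
proof (rule the_equality)
  let ?u = "lsq_prox d \<mu> R a b \<gamma> x"
  let ?obj = "\<lambda>v. lsq d \<mu> R a b v + (norm_d d (vsub x v))\<^sup>2 / (2 * \<gamma>)"
  have growth: "?obj ?u + inner_d d (vsub v ?u) (vsub v ?u) / (2 * \<gamma>) \<le> ?obj v" for v
    using lsq_prox_growth[OF fam \<mu> \<gamma>] by (simp add: add.assoc)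
  have uR: "?u \<in> Rd d" by (rule lsq_prox_in_Rd[OF fam x])
  show "?u \<in> Rd d \<and> (\<forall>v\<in>Rd d. ?obj ?u \<le> ?obj v)"
    using uR growth \<gamma> inner_d_self_nonneg by (smt (verit) divide_nonneg_pos)
  fix u assume u: "u \<in> Rd d \<and> (\<forall>v\<in>Rd d. ?obj u \<le> ?obj v)"
  then have "inner_d d (vsub u ?u) (vsub u ?u) / (2 * \<gamma>) \<le> 0"
    using uR growth[of u] by fastforce
  then have "inner_d d (vsub u ?u) (vsub u ?u) = 0"
    using \<gamma> inner_d_self_nonneg[of d "vsub u ?u"] by (simp add: divide_le_0_iff)
  with u uR show "u = ?u" unfolding vsub_def by (blast intro: Rd_eqI)
qed

section \<open>Chain spaces and the span property of PIFO algorithms\<close>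

text \<open>The points orthogonal to the links \<open>U j, \<dots>, U (k - 1)\<close>, i.e. those that have progressed at
  most \<open>j\<close> links along the chain.\<close>
definition chain_space :: "nat \<Rightarrow> nat \<Rightarrow> (nat \<Rightarrow> vec) \<Rightarrow> nat \<Rightarrow> vec set" where
  "chain_space d k U j = {x \<in> Rd d. \<forall>m. j \<le> m \<longrightarrow> m < k \<longrightarrow> inner_d d (U m) x = 0}"

lemma chain_space_mono: "j \<le> j' \<Longrightarrow> chain_space d k U j \<subseteq> chain_space d k U j'"
  unfolding chain_space_def by auto

lemma chain_space_subset_Rd: "chain_space d k U j \<subseteq> Rd d"
  unfolding chain_space_def by auto

lemma chain_space_lincomb:
  assumes "\<And>r. r \<in> T \<Longrightarrow> c r = 0 \<or> v r \<in> chain_space d k U j"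
  shows "(\<lambda>i. \<Sum>r\<in>T. c r * v r i) \<in> chain_space d k U j"
proof -
  have "c r * v r i = 0" if "r \<in> T" "d \<le> i" for r i
    using assms[OF that(1)] that(2) unfolding chain_space_def Rd_def by auto
  moreover have "c r * inner_d d (U m) (v r) = 0" if "r \<in> T" "j \<le> m" "m < k" for r m
    using assms[OF that(1)] that(2,3) unfolding chain_space_def by auto
  ultimately show ?thesis
    unfolding chain_space_def Rd_def by (auto simp: inner_d_sum_right intro!: sum.neutral)
qed

lemma chain_space_diff:
  "x \<in> chain_space d k U j \<Longrightarrow> y \<in> chain_space d k U j \<Longrightarrow> (\<lambda>i. x i - y i) \<in> chain_space d k U j"
  unfolding chain_space_def by (auto simp: Rd_diff inner_d_diff_right)

lemma vspan_chain_space: "S \<subseteq> chain_space d k U j \<Longrightarrow> vspan S \<subseteq> chain_space d k U j"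
  unfolding vspan_def using chain_space_lincomb[of _ _ "\<lambda>u. u"] by blast

text \<open>The gradient and the proximal point of \<open>lsq\<close> at \<open>x\<close> are combinations of \<open>x\<close> and of those
  \<open>a r\<close> whose residual at \<open>x\<close> is nonzero.\<close>
lemma lsq_oracle_chain_space:
  assumes fam: "orthogonal_family d R a \<beta>" and \<mu>: "0 \<le> \<mu>" and \<gamma>: "0 < \<gamma>"
    and x: "x \<in> chain_space d k U j"
    and active: "\<And>r. r \<in> R \<Longrightarrow> inner_d d (a r) x - b r = 0 \<or> a r \<in> chain_space d k U j"
  shows "grad d (lsq d \<mu> R a b) x \<in> chain_space d k U j"
    and "prox d \<gamma> (lsq d \<mu> R a b) x \<in> chain_space d k U j"
proof -
  have "x \<in> Rd d" using x chain_space_subset_Rd by blast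
  show "grad d (lsq d \<mu> R a b) x \<in> chain_space d k U j"
    unfolding grad_lsq[OF fam \<mu>] lsq_grad_def
    by (rule chain_space_lincomb) (use active in auto)
  show "prox d \<gamma> (lsq d \<mu> R a b) x \<in> chain_space d k U j"
    unfolding prox_lsq[OF fam \<mu> \<gamma> \<open>x \<in> Rd d\<close>] lsq_prox_def
    by (rule chain_space_diff[OF x], rule chain_space_lincomb) (use active in auto)
qed

lemma pifo_algD:
  assumes "pifo_alg n p gam alg"
  shows "\<forall>j<n. 0 \<le> p d j" and "(\<Sum>j<n. p d j) = 1" and "\<forall>t\<ge>1. 0 < gam d t"
    and "alg d [] \<in> Rd d"
    and "h \<noteq> [] \<Longrightarrow> alg d h \<in> vspan ({alg d (take k h) | k. k < length h}
                              \<union> {fst (snd (snd (h ! k))) | k. k < length h}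
                              \<union> {snd (snd (snd (h ! k))) | k. k < length h})"
  using assms unfolding pifo_alg_def by blast+

definition count_in :: "nat set \<Rightarrow> nat list \<Rightarrow> nat" where
  "count_in D s = length (filter (\<lambda>i. i \<in> D) s)"

definition history_in :: "nat \<Rightarrow> (nat \<Rightarrow> obs list \<Rightarrow> vec) \<Rightarrow> vec set \<Rightarrow> obs list \<Rightarrow> bool" where
  "history_in d alg W h \<longleftrightarrow> (\<forall>k<length h. alg d (take k h) \<in> W
      \<and> fst (snd (snd (h ! k))) \<in> W \<and> snd (snd (snd (h ! k))) \<in> W)"

lemma run_hist_snoc:
  "run_hist d F gam alg (s @ [i]) = hist_step d F gam alg (run_hist d F gam alg s) i"
  unfolding run_hist_def by simp

lemma pifo_alg_in_span_closed:
  assumes pifo: "pifo_alg n p gam alg" and "history_in d alg W h" and "alg d [] \<in> W"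
    and span: "\<And>S. S \<subseteq> W \<Longrightarrow> vspan S \<subseteq> W"
  shows "alg d h \<in> W"
proof (cases "h = []")
  case False
  have "{alg d (take k h) | k. k < length h} \<union> {fst (snd (snd (h ! k))) | k. k < length h}
      \<union> {snd (snd (snd (h ! k))) | k. k < length h} \<subseteq> W"
    using assms(2) unfolding history_in_def by auto
  with span show ?thesis using pifo_algD(5)[OF pifo False] by blast
qed (use assms in simp)

lemma history_in_snoc:
  assumes "history_in d alg W h" "W \<subseteq> W'" "alg d h \<in> W'" "g \<in> W'" "u \<in> W'"
  shows "history_in d alg W' (h @ [(i, v, g, u)])"
  unfolding history_in_def
proof (intro allI impI)
  fix k assume "k < length (h @ [(i, v, g, u)])"
  then consider "k < length h" | "k = length h" by fastforce
  then show "alg d (take k (h @ [(i, v, g, u)])) \<in> W' \<and> fst (snd (snd ((h @ [(i, v, g, u)]) ! k))) \<in> W'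
      \<and> snd (snd (snd ((h @ [(i, v, g, u)]) ! k))) \<in> W'"
    by cases (use assms in \<open>auto simp: history_in_def nth_append\<close>)
qed

lemma history_in_run_hist:
  fixes V :: "nat \<Rightarrow> vec set"
  assumes pifo: "pifo_alg n p gam alg"
    and V0: "alg d [] \<in> V 0"
    and mono: "\<And>j j'. j \<le> j' \<Longrightarrow> V j \<subseteq> V j'"
    and span: "\<And>S j. S \<subseteq> V j \<Longrightarrow> vspan S \<subseteq> V j"
    and step: "\<And>i j x \<gamma>. i < n \<Longrightarrow> 0 < \<gamma> \<Longrightarrow> x \<in> V j \<Longrightarrow>
        grad d (F i) x \<in> V (j + (if i \<in> D then 1 else 0)) \<and>
        prox d \<gamma> (F i) x \<in> V (j + (if i \<in> D then 1 else 0))"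
  shows "set s \<subseteq> {..<n} \<Longrightarrow> history_in d alg (V (count_in D s)) (run_hist d F gam alg s)"
proof (induction s rule: rev_induct)
  case Nil
  show ?case by (simp add: history_in_def run_hist_def)
next
  case (snoc i s)
  define h where "h = run_hist d F gam alg s"
  define j where "j = count_in D s"
  define j' where "j' = j + (if i \<in> D then 1 else 0)"
  define x where "x = alg d h"
  define \<gamma> where "\<gamma> = gam d (Suc (length h))"
  have IH: "history_in d alg (V j) h" and i: "i < n"
    using snoc unfolding h_def j_def by auto
  have "V 0 \<subseteq> V j" by (rule mono) simp
  with V0 have "alg d [] \<in> V j" by blast
  then have x: "x \<in> V j" unfolding x_def by (rule pifo_alg_in_span_closed[OF pifo IH _ span])
  have "0 < \<gamma>" unfolding \<gamma>_def using pifo_algD(3)[OF pifo] by simp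
  with step[OF i _ x] have next_in: "grad d (F i) x \<in> V j'" "prox d \<gamma> (F i) x \<in> V j'"
    unfolding j'_def by auto
  have "V j \<subseteq> V j'" unfolding j'_def by (rule mono) simp
  with IH x next_in
  have "history_in d alg (V j') (h @ [(i, F i x, grad d (F i) x, prox d \<gamma> (F i) x)])"
    unfolding x_def by (intro history_in_snoc) auto
  moreover have "run_hist d F gam alg (s @ [i]) = h @ [(i, F i x, grad d (F i) x, prox d \<gamma> (F i) x)]"
    unfolding run_hist_snoc hist_step_def Let_def h_def x_def \<gamma>_def ..
  moreover have "count_in D (s @ [i]) = j'" unfolding count_in_def j'_def j_def by simp
  ultimately show ?case by simp
qed

lemma pifo_iterate_progress:
  fixes V :: "nat \<Rightarrow> vec set"
  assumes pifo: "pifo_alg n p gam alg"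
    and V0: "alg d [] \<in> V 0"
    and mono: "\<And>j j'. j \<le> j' \<Longrightarrow> V j \<subseteq> V j'"
    and span: "\<And>S j. S \<subseteq> V j \<Longrightarrow> vspan S \<subseteq> V j"
    and step: "\<And>i j x \<gamma>. i < n \<Longrightarrow> 0 < \<gamma> \<Longrightarrow> x \<in> V j \<Longrightarrow>
        grad d (F i) x \<in> V (j + (if i \<in> D then 1 else 0)) \<and>
        prox d \<gamma> (F i) x \<in> V (j + (if i \<in> D then 1 else 0))"
    and s: "set s \<subseteq> {..<n}"
  shows "iterate d F gam alg s \<in> V (count_in D s)"
proof -
  have "history_in d alg (V (count_in D s)) (run_hist d F gam alg s)"
    by (rule history_in_run_hist[OF pifo V0 mono span step s])
  moreover have "alg d [] \<in> V (count_in D s)" using V0 mono[of 0] by blast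
  ultimately show ?thesis
    unfolding iterate_def using pifo_alg_in_span_closed[OF pifo] span by blast
qed

section \<open>Expectations over sampled index sequences\<close>

definition index_seqs :: "nat \<Rightarrow> nat \<Rightarrow> nat list set" where
  "index_seqs n t = {s. length s = t \<and> set s \<subseteq> {..<n}}"

definition seq_prob :: "(nat \<Rightarrow> real) \<Rightarrow> nat list \<Rightarrow> real" where
  "seq_prob q s = (\<Prod>k<length s. q (s ! k))"

lemma expect_iter_eq:
  "expect_iter n d p F gam alg g t = (\<Sum>s\<in>index_seqs n t. seq_prob (p d) s * g (iterate d F gam alg s))"
  unfolding expect_iter_def index_seqs_def seq_prob_def by (intro sum.cong) auto

lemma index_seqs_0: "index_seqs n 0 = {[]}"
  unfolding index_seqs_def by auto

lemma sum_index_seqs_Suc: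
  "(\<Sum>s\<in>index_seqs n (Suc t). g s) = (\<Sum>i<n. \<Sum>s\<in>index_seqs n t. g (i # s))"
proof -
  have seqs: "index_seqs n (Suc t) = (\<lambda>(i, s). i # s) ` ({..<n} \<times> index_seqs n t)"
    unfolding index_seqs_def by (auto simp: length_Suc_conv)
  have "inj_on (\<lambda>(i, s). i # s) ({..<n} \<times> index_seqs n t)" by (auto simp: inj_on_def)
  then show ?thesis
    unfolding seqs by (simp add: sum.reindex sum.cartesian_product split_def)
qed

lemma seq_prob_Cons: "seq_prob q (i # s) = q i * seq_prob q s"
  unfolding seq_prob_def by (simp only: length_Cons prod.lessThan_Suc_shift) simp

lemma seq_prob_nonneg: "\<forall>i<n. 0 \<le> q i \<Longrightarrow> s \<in> index_seqs n t \<Longrightarrow> 0 \<le> seq_prob q s"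
  unfolding seq_prob_def index_seqs_def by (intro prod_nonneg) (auto simp: subset_iff)

lemma sum_seq_prob:
  assumes "(\<Sum>i<n. q i) = 1"
  shows "(\<Sum>s\<in>index_seqs n t. seq_prob q s) = 1"
proof (induction t)
  case (Suc t)
  then show ?case
    using assms by (simp add: sum_index_seqs_Suc seq_prob_Cons flip: sum_distrib_left)
qed (simp add: index_seqs_0 seq_prob_def)

lemma expected_count_in:
  assumes q: "(\<Sum>i<n. q i) = 1" and D: "D \<subseteq> {..<n}"
  shows "(\<Sum>s\<in>index_seqs n t. seq_prob q s * real (count_in D s)) = real t * (\<Sum>i\<in>D. q i)"
proof (induction t)
  case 0
  show ?case by (simp add: index_seqs_0 count_in_def)
next
  case (Suc t)
  have "(\<Sum>s\<in>index_seqs n (Suc t). seq_prob q s * real (count_in D s))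
      = (\<Sum>i<n. \<Sum>s\<in>index_seqs n t. (if i \<in> D then q i else 0) * seq_prob q s
                                     + q i * (seq_prob q s * real (count_in D s)))"
    unfolding sum_index_seqs_Suc seq_prob_Cons count_in_def
    by (intro sum.cong refl) (simp add: algebra_simps)
  also have "\<dots> = (\<Sum>i<n. if i \<in> D then q i else 0)
      + (\<Sum>i<n. q i) * (\<Sum>s\<in>index_seqs n t. seq_prob q s * real (count_in D s))"
    by (simp add: sum.distrib sum_seq_prob[OF q] sum_distrib_right
        flip: sum_distrib_left)
  finally show ?case using Suc q D by (simp add: sum.If_cases Int_absorb1 algebra_simps)
qed

text \<open>Markov's inequality for the count: pointwise \<open>Y s \<ge> G (1 - count_in D s / m)\<close>, and the
  expected count is \<open>t \<cdot> q(D)\<close>.\<close>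
lemma expectation_ge_of_count_bound:
  assumes q0: "\<forall>i<n. 0 \<le> q i" and q1: "(\<Sum>i<n. q i) = 1" and D: "D \<subseteq> {..<n}"
    and m: "0 < m" and G: "0 \<le> G"
    and Y0: "\<And>s. s \<in> index_seqs n t \<Longrightarrow> 0 \<le> Y s"
    and YG: "\<And>s. s \<in> index_seqs n t \<Longrightarrow> count_in D s < m \<Longrightarrow> G \<le> Y s"
  shows "G * (1 - real t * (\<Sum>i\<in>D. q i) / real m) \<le> (\<Sum>s\<in>index_seqs n t. seq_prob q s * Y s)"
proof -
  have "G - G / real m * real (count_in D s) \<le> Y s" if s: "s \<in> index_seqs n t" for s
  proof (cases "count_in D s < m")
    case True
    have "0 \<le> G / real m * real (count_in D s)" using G by simp
    with YG[OF s True] show ?thesis by linarith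
  next
    case False
    then have "G / real m * real m \<le> G / real m * real (count_in D s)"
      using G by (intro mult_left_mono) auto
    with Y0[OF s] m show ?thesis by simp
  qed
  then have "(\<Sum>s\<in>index_seqs n t. seq_prob q s * (G - G / real m * real (count_in D s)))
      \<le> (\<Sum>s\<in>index_seqs n t. seq_prob q s * Y s)"
    by (intro sum_mono mult_left_mono seq_prob_nonneg[OF q0])
  moreover have "(\<Sum>s\<in>index_seqs n t. seq_prob q s * (G - G / real m * real (count_in D s)))
      = G * (1 - real t * (\<Sum>i\<in>D. q i) / real m)"
    by (simp add: algebra_simps sum_subtractf sum_distrib_left sum_seq_prob[OF q1]
        flip: expected_count_in[OF q1 D, of t] sum_distrib_left sum_divide_distrib)
  ultimately show ?thesis by simp
qed

lemma pifo_expected_gap: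
  fixes V :: "nat \<Rightarrow> vec set"
  assumes pifo: "pifo_alg n p gam alg"
    and V0: "alg d [] \<in> V 0"
    and mono: "\<And>j j'. j \<le> j' \<Longrightarrow> V j \<subseteq> V j'"
    and span: "\<And>S j. S \<subseteq> V j \<Longrightarrow> vspan S \<subseteq> V j"
    and step: "\<And>i j x \<gamma>. i < n \<Longrightarrow> 0 < \<gamma> \<Longrightarrow> x \<in> V j \<Longrightarrow>
        grad d (F i) x \<in> V (j + (if i \<in> D then 1 else 0)) \<and>
        prox d \<gamma> (F i) x \<in> V (j + (if i \<in> D then 1 else 0))"
    and D: "D \<subseteq> {..<n}" and m: "0 < m" and G: "0 \<le> G"
    and min: "\<And>x. f xs \<le> f x"
    and gap: "\<And>x. x \<in> V (m - 1) \<Longrightarrow> f xs + G \<le> f x"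
  shows "G * (1 - real t * (\<Sum>i\<in>D. p d i) / real m) \<le> expect_iter n d p F gam alg f t - f xs"
proof -
  have "G * (1 - real t * (\<Sum>i\<in>D. p d i) / real m)
      \<le> (\<Sum>s\<in>index_seqs n t. seq_prob (p d) s * (f (iterate d F gam alg s) - f xs))"
  proof (rule expectation_ge_of_count_bound[OF pifo_algD(1,2)[OF pifo] D m G])
    fix s assume s: "s \<in> index_seqs n t"
    show "0 \<le> f (iterate d F gam alg s) - f xs" using min by simp
    assume "count_in D s < m"
    then have "V (count_in D s) \<subseteq> V (m - 1)" by (intro mono) simp
    moreover have "iterate d F gam alg s \<in> V (count_in D s)"
      using s unfolding index_seqs_def by (intro pifo_iterate_progress[OF pifo V0 mono span step]) auto
    ultimately show "G \<le> f (iterate d F gam alg s) - f xs" using gap by fastforce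
  qed
  also have "\<dots> = expect_iter n d p F gam alg f t - f xs"
    unfolding expect_iter_eq
    by (simp add: right_diff_distrib sum_subtractf sum_seq_prob[OF pifo_algD(2)[OF pifo]]
        flip: sum_distrib_right)
  finally show ?thesis .
qed

section \<open>The hard instances\<close>

definition orthonormal_d :: "nat \<Rightarrow> nat \<Rightarrow> (nat \<Rightarrow> vec) \<Rightarrow> bool" where
  "orthonormal_d d k U \<longleftrightarrow> (\<forall>m<k. U m \<in> Rd d) \<and>
     (\<forall>i<k. \<forall>j<k. inner_d d (U i) (U j) = (if i = j then 1 else 0))"

text \<open>The \<open>m\<close>-th vector lives on the coordinates \<open>2m, 2m+1\<close> and is a unit vector orthogonal to the
  restriction of \<open>x0\<close> to them.\<close>
definition perp_basis :: "vec \<Rightarrow> nat \<Rightarrow> vec" where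
  "perp_basis x0 m = (if x0 (2*m) = 0 \<and> x0 (2*m+1) = 0 then (\<lambda>j. if j = 2*m then 1 else 0)
     else (\<lambda>j. if j = 2*m then - x0 (2*m+1) / sqrt ((x0 (2*m))\<^sup>2 + (x0 (2*m+1))\<^sup>2)
               else if j = 2*m+1 then x0 (2*m) / sqrt ((x0 (2*m))\<^sup>2 + (x0 (2*m+1))\<^sup>2) else 0))"

lemma perp_basis_outside: "j \<noteq> 2*m \<Longrightarrow> j \<noteq> 2*m+1 \<Longrightarrow> perp_basis x0 m j = 0"
  unfolding perp_basis_def by auto

lemma inner_d_perp_basis:
  assumes "m < k"
  shows "inner_d (2*k) (perp_basis x0 m) y
       = perp_basis x0 m (2*m) * y (2*m) + perp_basis x0 m (2*m+1) * y (2*m+1)"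
proof -
  have "inner_d (2*k) (perp_basis x0 m) y = (\<Sum>j\<in>{2*m, 2*m+1}. perp_basis x0 m j * y j)"
    unfolding inner_d_def using assms perp_basis_outside
    by (intro sum.mono_neutral_right) auto
  then show ?thesis by simp
qed

lemma perp_basis_unit: "(perp_basis x0 m (2*m))\<^sup>2 + (perp_basis x0 m (2*m+1))\<^sup>2 = 1"
proof (cases "x0 (2*m) = 0 \<and> x0 (2*m+1) = 0")
  case False
  then have "0 < (x0 (2*m))\<^sup>2 + (x0 (2*m+1))\<^sup>2" by (simp add: sum_power2_gt_zero_iff)
  with False show ?thesis by (simp add: perp_basis_def power_divide add_divide_distrib [symmetric])
qed (simp add: perp_basis_def)

lemma orthonormal_perp_basis: "orthonormal_d (2*k) k (perp_basis x0)"
  unfolding orthonormal_d_def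
proof (intro conjI allI impI)
  fix m assume "m < k"
  then show "perp_basis x0 m \<in> Rd (2*k)" unfolding Rd_def using perp_basis_outside by auto
next
  fix i j assume "i < k" "j < k"
  then show "inner_d (2*k) (perp_basis x0 i) (perp_basis x0 j) = (if i = j then 1 else 0)"
    unfolding inner_d_perp_basis[OF \<open>i < k\<close>]
    using perp_basis_unit[of x0 i] perp_basis_outside[of _ j x0]
    by (auto simp: power2_eq_square)
qed

lemma perp_basis_orthogonal: "m < k \<Longrightarrow> inner_d (2*k) (perp_basis x0 m) x0 = 0"
  unfolding inner_d_perp_basis by (auto simp: perp_basis_def field_simps)

lemma exists_orthonormal_orthogonal:
  "\<exists>U. orthonormal_d (2*k) k U \<and> (\<forall>m<k. inner_d (2*k) (U m) x0 = 0)"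
  using orthonormal_perp_basis perp_basis_orthogonal by blast

definition chain_vec :: "(nat \<Rightarrow> vec) \<Rightarrow> nat \<Rightarrow> vec" where
  "chain_vec U r = (if r = 0 then U 0 else (\<lambda>j. U (r - 1) j - U r j))"

definition chain_rhs :: "real \<Rightarrow> nat \<Rightarrow> real" where
  "chain_rhs \<alpha> r = (if r = 0 then \<alpha> else 0)"

context
  fixes d k :: nat and U :: "nat \<Rightarrow> vec"
  assumes U: "orthonormal_d d k U"
begin

lemma orthonormal_inner: "i < k \<Longrightarrow> j < k \<Longrightarrow> inner_d d (U i) (U j) = (if i = j then 1 else 0)"
  using U unfolding orthonormal_d_def by blast

lemma orthogonal_family_orthonormal: "orthogonal_family d {..<k} U 1"
  using U unfolding orthogonal_family_def orthonormal_d_def by auto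

lemma orthonormal_in_chain_space: "m < k \<Longrightarrow> m < j \<Longrightarrow> U m \<in> chain_space d k U j"
  using U unfolding chain_space_def orthonormal_d_def by auto

lemma orthogonal_family_chain:
  assumes R: "R \<subseteq> {..<k}" and gaps: "\<And>r s. r \<in> R \<Longrightarrow> s \<in> R \<Longrightarrow> r < s \<Longrightarrow> r + 1 < s"
  shows "orthogonal_family d R (chain_vec U) 2"
  unfolding orthogonal_family_def
proof (intro conjI ballI impI)
  show "finite R" using R finite_subset by blast
  fix r assume "r \<in> R"
  then have r: "r < k" using R by auto
  show "chain_vec U r \<in> Rd d"
    using U r unfolding chain_vec_def orthonormal_d_def by (auto intro: Rd_diff)
  show "inner_d d (chain_vec U r) (chain_vec U r) \<le> 2"
    using r by (simp add: chain_vec_def inner_d_diff_left inner_d_diff_right orthonormal_inner)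
  have orth: "inner_d d (chain_vec U r) (chain_vec U s) = 0" if "s < k" "r + 1 < s" for r s
    using that by (simp add: chain_vec_def inner_d_diff_left inner_d_diff_right orthonormal_inner)
        presburger
  fix s assume "s \<in> R" "r \<noteq> s"
  then show "inner_d d (chain_vec U r) (chain_vec U s) = 0"
    using gaps[OF \<open>r \<in> R\<close>] gaps[OF \<open>s \<in> R\<close> \<open>r \<in> R\<close>] R r orth[of s r] orth[of r s]
    by (cases "r < s") (auto simp: inner_d_commute)
qed simp

text \<open>A gradient or proximal step can only make progress along the chain one link at a time:
  a residual of a link beyond the current position vanishes.\<close>
lemma chain_vec_active:
  assumes x: "x \<in> chain_space d k U j" and r: "r < k"
  shows "inner_d d (chain_vec U r) x - chain_rhs \<alpha> r = 0 \<or> chain_vec U r \<in> chain_space d k U (j + 1)"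
proof (cases "r = 0 \<or> r \<le> j")
  case True
  then have "chain_vec U r \<in> chain_space d k U (j + 1)"
    using r unfolding chain_vec_def
    by (auto intro!: chain_space_diff orthonormal_in_chain_space)
  then show ?thesis ..
next
  case False
  then have "inner_d d (U (r - 1)) x = 0" "inner_d d (U r) x = 0"
    using x r unfolding chain_space_def by auto
  with False show ?thesis unfolding chain_vec_def chain_rhs_def by (simp add: inner_d_diff_left)
qed

text \<open>If \<open>x\<close> has not reached the last link, the residuals telescope to \<open>\<alpha>\<close>, and Cauchy--Schwarz
  spreads \<open>\<alpha>\<^sup>2\<close> over the \<open>k\<close> residuals.\<close>
lemma chain_residuals_lower:
  assumes k: "1 \<le> k" and x: "x \<in> chain_space d k U (k - 1)"
  shows "\<alpha>\<^sup>2 \<le> real k * (\<Sum>r<k. (inner_d d (chain_vec U r) x - chain_rhs \<alpha> r)\<^sup>2)"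
proof -
  define y where "y m = inner_d d (U m) x" for m
  define z where "z r = (if r = 0 then \<alpha> - y 0 else y (r - 1) - y r)" for r
  have z: "(z r)\<^sup>2 = (inner_d d (chain_vec U r) x - chain_rhs \<alpha> r)\<^sup>2" for r
    unfolding z_def y_def chain_vec_def chain_rhs_def
    by (cases "r = 0") (auto simp: inner_d_diff_left power2_commute)
  obtain k' where k': "k = Suc k'" using k by (cases k) auto
  have "(\<Sum>r<k. z r) = z 0 + (\<Sum>r<k'. z (Suc r))" unfolding k' by (rule sum.lessThan_Suc_shift)
  also have "(\<Sum>r<k'. z (Suc r)) = - (\<Sum>r<k'. y (Suc r) - y r)"
    unfolding z_def by (simp add: sum_negf[symmetric])
  also have "(\<Sum>r<k'. y (Suc r) - y r) = y k' - y 0" by (rule sum_lessThan_telescope)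
  also have "y k' = 0" using x unfolding chain_space_def y_def k' by auto
  finally have "(\<Sum>r<k. z r) = \<alpha>" unfolding z_def by simp
  then have "\<alpha>\<^sup>2 \<le> (\<Sum>r<k. (z r)\<^sup>2) * card {..<k}"
    using sum_squared_le_sum_of_squares[of z "{..<k}"] by simp
  then show ?thesis unfolding z by (simp add: mult.commute)
qed

lemma norm_d_orthonormal_sum: "norm_d d (\<lambda>j. \<Sum>m<k. c * U m j) = sqrt (real k) * \<bar>c\<bar>"
proof -
  have "(norm_d d (\<lambda>j. \<Sum>m<k. c * U m j))\<^sup>2 = (\<Sum>m<k. c\<^sup>2 * inner_d d (U m) (U m))"
    unfolding norm_d_power2 by (rule orthogonal_family_norm_sum[OF orthogonal_family_orthonormal])
  also have "\<dots> = (sqrt (real k) * \<bar>c\<bar>)\<^sup>2" by (simp add: orthonormal_inner power_mult_distrib)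
  finally show ?thesis using norm_d_nonneg by (simp add: power2_eq_iff_nonneg)
qed

lemma chain_residuals_vanish:
  assumes x0: "\<forall>m<k. inner_d d (U m) x0 = 0" and r: "r < k"
  shows "inner_d d (chain_vec U r) (\<lambda>j. x0 j + (\<Sum>m<k. \<alpha> * U m j)) = chain_rhs \<alpha> r"
proof -
  have "inner_d d (U i) (\<lambda>j. x0 j + (\<Sum>m<k. \<alpha> * U m j)) = \<alpha>" if i: "i < k" for i
  proof -
    have "(\<Sum>m<k. \<alpha> * inner_d d (U i) (U m)) = (\<Sum>m<k. if m = i then \<alpha> else 0)"
      using i by (intro sum.cong) (auto simp: orthonormal_inner)
    with i x0 show ?thesis unfolding inner_d_add_right inner_d_sum_right by simp
  qed
  with r show ?thesis
    unfolding chain_vec_def chain_rhs_def by (simp add: inner_d_diff_left)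
qed

lemma lsq_chain_vanish:
  "\<forall>m<k. inner_d d (U m) x0 = 0 \<Longrightarrow>
    lsq d \<mu> {..<k} (chain_vec U) (chain_rhs \<alpha>) (\<lambda>j. x0 j + (\<Sum>m<k. \<alpha> * U m j)) = 0"
  unfolding lsq_def by (simp add: chain_residuals_vanish)

end

lemma sum_lsq_disjoint:
  assumes "finite I" "\<forall>i\<in>I. finite (R i)" "\<forall>i\<in>I. \<forall>i'\<in>I. i \<noteq> i' \<longrightarrow> R i \<inter> R i' = {}"
  shows "(\<Sum>i\<in>I. lsq d \<mu> (R i) a b x) = lsq d \<mu> (\<Union>i\<in>I. R i) a b x"
  unfolding lsq_def by (simp add: sum.UNION_disjoint[OF assms] sum_distrib_left)

definition chain_part :: "nat \<Rightarrow> nat \<Rightarrow> nat \<Rightarrow> nat \<Rightarrow> nat set" where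
  "chain_part k i0 i1 i = {r. r < k \<and> (i = i0 \<and> even r \<or> i = i1 \<and> odd r)}"

lemma sum_lsq_chain_part:
  assumes "i0 < n" "i1 < n" "i0 \<noteq> i1"
  shows "(\<Sum>i<n. lsq d \<mu> (chain_part k i0 i1 i) a b x) = lsq d \<mu> {..<k} a b x"
proof -
  have "(\<Union>i<n. chain_part k i0 i1 i) = {..<k}"
  proof
    show "{..<k} \<subseteq> (\<Union>i<n. chain_part k i0 i1 i)"
    proof
      fix r assume "r \<in> {..<k}"
      then have "r \<in> chain_part k i0 i1 (if even r then i0 else i1)"
        unfolding chain_part_def by simp
      then show "r \<in> (\<Union>i<n. chain_part k i0 i1 i)" using assms by (auto split: if_splits)
    qed
  qed (auto simp: chain_part_def)
  moreover have "chain_part k i0 i1 i \<inter> chain_part k i0 i1 i' = {}" if "i \<noteq> i'" for i i'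
    using that assms(3) unfolding chain_part_def by auto
  moreover have "finite (chain_part k i0 i1 i)" for i unfolding chain_part_def by simp
  ultimately show ?thesis using sum_lsq_disjoint[of "{..<n}" "chain_part k i0 i1"] by simp
qed

context
  fixes d k :: nat and U :: "nat \<Rightarrow> vec"
  assumes U: "orthonormal_d d k U"
begin

lemma orthogonal_family_chain_part:
  "i0 \<noteq> i1 \<Longrightarrow> orthogonal_family d (chain_part k i0 i1 i) (chain_vec U) 2"
  by (rule orthogonal_family_chain[OF U]) (auto simp: chain_part_def, presburger+)

lemma chain_part_step:
  assumes i01: "i0 \<noteq> i1" and \<mu>: "0 \<le> \<mu>" and \<gamma>: "0 < \<gamma>" and x: "x \<in> chain_space d k U j"
    and j': "j' = j + (if i \<in> {i0, i1} then 1 else 0)"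
  shows "grad d (lsq d \<mu> (chain_part k i0 i1 i) (chain_vec U) (chain_rhs \<alpha>)) x \<in> chain_space d k U j'
    \<and> prox d \<gamma> (lsq d \<mu> (chain_part k i0 i1 i) (chain_vec U) (chain_rhs \<alpha>)) x \<in> chain_space d k U j'"
proof -
  have "chain_space d k U j \<subseteq> chain_space d k U j'" unfolding j' by (rule chain_space_mono) simp
  with x have x': "x \<in> chain_space d k U j'" by blast
  have "inner_d d (chain_vec U r) x - chain_rhs \<alpha> r = 0 \<or> chain_vec U r \<in> chain_space d k U j'"
    if r: "r \<in> chain_part k i0 i1 i" for r
  proof -
    from r have "i \<in> {i0, i1}" "r < k" unfolding chain_part_def by auto
    with chain_vec_active[OF U x \<open>r < k\<close>, of \<alpha>] show ?thesis unfolding j' by simp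
  qed
  then show ?thesis
    using lsq_oracle_chain_space[OF orthogonal_family_chain_part[OF i01] \<mu> \<gamma> x'] by simp
qed

lemma chain_expected_gap:
  assumes pifo: "pifo_alg n p gam alg" and k: "1 \<le> k" and \<mu>: "0 \<le> \<mu>"
    and i: "i0 < n" "i1 < n" "i0 \<noteq> i1"
    and x0: "alg d [] \<in> Rd d" "\<forall>m<k. inner_d d (U m) (alg d []) = 0"
    and F: "\<And>i. F i = lsq d \<mu> (chain_part k i0 i1 i) (chain_vec U) (chain_rhs \<alpha>)"
    and xs: "xs = (\<lambda>j. alg d [] j + (\<Sum>m<k. \<alpha> * U m j))"
  shows "\<mu> * \<alpha>\<^sup>2 / (2 * real n * real k) * (1 - real t * (p d i0 + p d i1) / real k)
      \<le> expect_iter n d p F gam alg (avg_fun n F) t - avg_fun n F xs"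
proof -
  have avg: "avg_fun n F x = lsq d \<mu> {..<k} (chain_vec U) (chain_rhs \<alpha>) x / real n" for x
    unfolding avg_fun_def F sum_lsq_chain_part[OF i] ..
  have "avg_fun n F xs = 0" unfolding avg xs lsq_chain_vanish[OF U x0(2)] by simp
  have "\<mu> * \<alpha>\<^sup>2 / (2 * real n * real k) * (1 - real t * (\<Sum>i\<in>{i0, i1}. p d i) / real k)
      \<le> expect_iter n d p F gam alg (avg_fun n F) t - avg_fun n F xs"
  proof (rule pifo_expected_gap[OF pifo, where V = "chain_space d k U"])
    show "alg d [] \<in> chain_space d k U 0" using x0 unfolding chain_space_def by auto
    show "grad d (F i) x \<in> chain_space d k U (j + (if i \<in> {i0, i1} then 1 else 0)) \<and>
        prox d \<gamma> (F i) x \<in> chain_space d k U (j + (if i \<in> {i0, i1} then 1 else 0))"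
      if "0 < \<gamma>" "x \<in> chain_space d k U j" for i j x \<gamma>
      unfolding F using \<mu> that i by (intro chain_part_step) simp_all
    show "avg_fun n F xs \<le> avg_fun n F x" for x
      unfolding \<open>avg_fun n F xs = 0\<close> avg[of x] using lsq_nonneg[OF \<mu>] by simp
    show "avg_fun n F xs + \<mu> * \<alpha>\<^sup>2 / (2 * real n * real k) \<le> avg_fun n F x"
      if "x \<in> chain_space d k U (k - 1)" for x
    proof -
      let ?S = "\<Sum>r<k. (inner_d d (chain_vec U r) x - chain_rhs \<alpha> r)\<^sup>2"
      have "\<mu> * \<alpha>\<^sup>2 \<le> \<mu> * (real k * ?S)"
        using chain_residuals_lower[OF U k that] \<mu> by (rule mult_left_mono)
      then have "\<mu> * \<alpha>\<^sup>2 / (2 * real n * real k) \<le> \<mu> * (real k * ?S) / (2 * real n * real k)"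
        by (rule divide_right_mono) simp
      also have "\<dots> = avg_fun n F x" using k unfolding avg[of x] lsq_def by simp
      finally show ?thesis unfolding \<open>avg_fun n F xs = 0\<close> by simp
    qed
  qed (use i k \<mu> chain_space_mono vspan_chain_space in simp_all)
  then show ?thesis using i by simp
qed

end

lemma chain_instance:
  fixes n k :: nat and L B :: real
  assumes pifo: "pifo_alg n p gam alg" and k: "1 \<le> k" and L: "0 < L" and B: "0 < B"
    and i: "i0 < n" "i1 < n" "i0 \<noteq> i1"
  shows "\<exists>F xs. (\<forall>i<n. L_smooth (2*k) L (F i) \<and> convex_d (2*k) (F i)) \<and>
     is_minimizer (2*k) (avg_fun n F) xs \<and> norm_d (2*k) (vsub (alg (2*k) []) xs) \<le> B \<and>
     (\<forall>t. L * B\<^sup>2 / (4 * real n * (real k)\<^sup>2) * (1 - real t * (p (2*k) i0 + p (2*k) i1) / real k)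
          \<le> expect_iter n (2*k) p F gam alg (avg_fun n F) t - avg_fun n F xs)"
proof -
  define d where "d = 2 * k"
  define x0 where "x0 = alg d []"
  obtain U where U: "orthonormal_d d k U" and x0U: "\<forall>m<k. inner_d d (U m) x0 = 0"
    unfolding d_def using exists_orthonormal_orthogonal by blast
  have x0R: "x0 \<in> Rd d" unfolding x0_def by (rule pifo_algD(4)[OF pifo])
  define \<alpha> where "\<alpha> = B / sqrt (real k)"
  define F where "F i = lsq d (L / 2) (chain_part k i0 i1 i) (chain_vec U) (chain_rhs \<alpha>)" for i
  define xs where "xs = (\<lambda>j. x0 j + (\<Sum>m<k. \<alpha> * U m j))"
  have gap: "L / 2 * \<alpha>\<^sup>2 / (2 * real n * real k) * (1 - real t * (p d i0 + p d i1) / real k)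
      \<le> expect_iter n d p F gam alg (avg_fun n F) t - avg_fun n F xs" for t
    using L x0R x0U unfolding x0_def xs_def F_def
    by (intro chain_expected_gap[OF U pifo k _ i]) simp_all
  have "xs \<in> Rd d"
    unfolding xs_def using U x0R by (intro Rd_add Rd_sum) (auto simp: orthonormal_d_def)
  moreover have "avg_fun n F xs \<le> avg_fun n F x" for x
  proof -
    have avg: "avg_fun n F y = lsq d (L / 2) {..<k} (chain_vec U) (chain_rhs \<alpha>) y / real n" for y
      unfolding avg_fun_def F_def sum_lsq_chain_part[OF i] ..
    have "avg_fun n F xs = 0" unfolding avg xs_def lsq_chain_vanish[OF U x0U] by simp
    then show ?thesis unfolding avg[of x] using lsq_nonneg[of "L / 2"] L by simp
  qed
  ultimately have "is_minimizer d (avg_fun n F) xs" unfolding is_minimizer_def by simp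
  moreover have "norm_d d (vsub x0 xs) = B"
  proof -
    have v: "vsub x0 xs = (\<lambda>j. \<Sum>m<k. (- \<alpha>) * U m j)" unfolding vsub_def xs_def by (simp add: sum_negf)
    show ?thesis using k B unfolding v norm_d_orthonormal_sum[OF U] \<alpha>_def by simp
  qed
  moreover have "\<forall>i<n. L_smooth d L (F i) \<and> convex_d d (F i)"
    using L unfolding F_def
    by (auto intro: L_smooth_lsq[OF orthogonal_family_chain_part[OF U i(3)]] convex_lsq)
  moreover have "L / 2 * \<alpha>\<^sup>2 / (2 * real n * real k) = L * B\<^sup>2 / (4 * real n * (real k)\<^sup>2)"
    unfolding \<alpha>_def using k by (simp add: power_divide power2_eq_square)
  ultimately show ?thesis using gap unfolding d_def x0_def by auto
qed

lemma avg_fun_single_link: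
  assumes i0: "i0 < n"
  shows "avg_fun n (\<lambda>i. lsq d L {0} U (\<lambda>_. if i = i0 then real n * B else 0)) x
       = L / 2 * (inner_d d (U 0) x - B)\<^sup>2 + L / 2 * (real n - 1) * B\<^sup>2"
proof -
  let ?y = "inner_d d (U 0) x"
  have "(\<Sum>i<n. lsq d L {0} U (\<lambda>_. if i = i0 then real n * B else 0) x)
      = L / 2 * (?y - real n * B)\<^sup>2 + (\<Sum>i\<in>{..<n} - {i0}. L / 2 * ?y\<^sup>2)"
    using i0 by (simp add: sum.remove lsq_def)
  also have "\<dots> = L / 2 * (?y - real n * B)\<^sup>2 + (real n - 1) * (L / 2 * ?y\<^sup>2)"
    using i0 by (simp add: of_nat_diff)
  finally show ?thesis
    using i0 unfolding avg_fun_def by (simp add: field_simps power2_eq_square)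
qed

lemma single_link_step:
  assumes U: "orthonormal_d d 1 U" and \<mu>: "0 \<le> \<mu>" and \<gamma>: "0 < \<gamma>" and x: "x \<in> chain_space d 1 U j"
    and j': "j' = j + (if i \<in> {i0} then 1 else 0)"
  shows "grad d (lsq d \<mu> {0} U (\<lambda>_. if i = i0 then c else 0)) x \<in> chain_space d 1 U j'
    \<and> prox d \<gamma> (lsq d \<mu> {0} U (\<lambda>_. if i = i0 then c else 0)) x \<in> chain_space d 1 U j'"
proof -
  have fam: "orthogonal_family d {0} U 1"
    using orthogonal_family_orthonormal[OF U] by (simp add: lessThan_Suc)
  have "chain_space d 1 U j \<subseteq> chain_space d 1 U j'" unfolding j' by (rule chain_space_mono) simp
  with x have x': "x \<in> chain_space d 1 U j'" by blast
  have "inner_d d (U 0) x - (if i = i0 then c else 0) = 0 \<or> U 0 \<in> chain_space d 1 U j'"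
  proof (cases "j' = 0")
    case True
    then have "i \<noteq> i0" "j = 0" unfolding j' by (auto split: if_splits)
    with x show ?thesis unfolding chain_space_def by simp
  next
    case False
    then show ?thesis using orthonormal_in_chain_space[OF U, of 0 j'] by simp
  qed
  then show ?thesis by (intro conjI lsq_oracle_chain_space[OF fam \<mu> \<gamma> x']) auto
qed

lemma single_instance:
  fixes n :: nat and L B :: real
  assumes pifo: "pifo_alg n p gam alg" and L: "0 < L" and B: "0 < B" and i0: "i0 < n"
  shows "\<exists>F xs. (\<forall>i<n. L_smooth 2 L (F i) \<and> convex_d 2 (F i)) \<and>
     is_minimizer 2 (avg_fun n F) xs \<and> norm_d 2 (vsub (alg 2 []) xs) \<le> B \<and>
     (\<forall>t. L * B\<^sup>2 / 2 * (1 - real t * p 2 i0)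
          \<le> expect_iter n 2 p F gam alg (avg_fun n F) t - avg_fun n F xs)"
proof -
  define x0 where "x0 = alg 2 []"
  obtain U where U: "orthonormal_d 2 1 U" and x0U: "inner_d 2 (U 0) x0 = 0"
    using exists_orthonormal_orthogonal[of 1 x0] by auto
  have U0: "U 0 \<in> Rd 2" "inner_d 2 (U 0) (U 0) = 1"
    using U unfolding orthonormal_d_def by auto
  have x0R: "x0 \<in> Rd 2" unfolding x0_def by (rule pifo_algD(4)[OF pifo])
  define F where "F i = lsq 2 L {0} U (\<lambda>_. if i = i0 then real n * B else 0)" for i
  define xs where "xs = (\<lambda>j. x0 j + B * U 0 j)"
  have avg: "avg_fun n F x = L / 2 * (inner_d 2 (U 0) x - B)\<^sup>2 + L / 2 * (real n - 1) * B\<^sup>2" for x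
    unfolding F_def by (rule avg_fun_single_link[OF i0])
  have y_xs: "inner_d 2 (U 0) xs = B"
    unfolding xs_def inner_d_add_right inner_d_scale_right x0U U0 by simp
  then have avg_xs: "avg_fun n F xs = L / 2 * (real n - 1) * B\<^sup>2" by (simp add: avg)
  have "xs \<in> Rd 2" unfolding xs_def by (intro Rd_add Rd_scale x0R U0)
  then have "is_minimizer 2 (avg_fun n F) xs"
    using L unfolding is_minimizer_def by (simp add: avg y_xs)
  moreover have "norm_d 2 (vsub x0 xs) = B"
  proof -
    have "vsub x0 xs = (\<lambda>j. (- B) * U 0 j)" unfolding vsub_def xs_def by simp
    then have "norm_d 2 (vsub x0 xs) = \<bar>- B\<bar> * norm_d 2 (U 0)" by (simp only: norm_d_scale)
    then show ?thesis using B U0 by (simp add: norm_d_eq_sqrt_inner)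
  qed
  moreover have "\<forall>i<n. L_smooth 2 L (F i) \<and> convex_d 2 (F i)"
    using L orthogonal_family_orthonormal[OF U] unfolding F_def
    by (auto simp: lessThan_Suc intro: L_smooth_lsq convex_lsq)
  moreover have "L * B\<^sup>2 / 2 * (1 - real t * (\<Sum>i\<in>{i0}. p 2 i) / real 1)
      \<le> expect_iter n 2 p F gam alg (avg_fun n F) t - avg_fun n F xs" for t
  proof (rule pifo_expected_gap[OF pifo, where V = "chain_space 2 1 U"])
    show "alg 2 [] \<in> chain_space 2 1 U 0"
      using x0R x0U unfolding x0_def chain_space_def by auto
    show "grad 2 (F i) x \<in> chain_space 2 1 U (j + (if i \<in> {i0} then 1 else 0)) \<and>
        prox 2 \<gamma> (F i) x \<in> chain_space 2 1 U (j + (if i \<in> {i0} then 1 else 0))"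
      if "0 < \<gamma>" "x \<in> chain_space 2 1 U j" for i j x \<gamma>
      unfolding F_def using L that by (intro single_link_step[OF U]) simp_all
    show "avg_fun n F xs + L * B\<^sup>2 / 2 \<le> avg_fun n F x" if "x \<in> chain_space 2 1 U (1 - 1)" for x
      using that unfolding avg_xs avg[of x] chain_space_def by (simp add: algebra_simps)
  qed (use i0 L avg_xs avg chain_space_mono vspan_chain_space in simp_all)
  ultimately show ?thesis unfolding x0_def by auto
qed

lemma exists_le_average:
  fixes q :: "nat \<Rightarrow> real"
  assumes "0 < n"
  shows "\<exists>i<n. q i \<le> (\<Sum>j<n. q j) / real n"
proof (rule ccontr)
  assume "\<not> ?thesis"
  then have "(\<Sum>i<n. (\<Sum>j<n. q j) / real n) < (\<Sum>i<n. q i)"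
    using assms by (intro sum_strict_mono) auto
  with assms show False by simp
qed

text \<open>Averaging \<open>q i + q (i + 1 mod n)\<close> over the cyclically consecutive pairs.\<close>
lemma exists_pair_le_twice_average:
  fixes q :: "nat \<Rightarrow> real"
  assumes n: "2 \<le> n" and q: "(\<Sum>i<n. q i) = 1"
  shows "\<exists>i0 i1. i0 < n \<and> i1 < n \<and> i0 \<noteq> i1 \<and> q i0 + q i1 \<le> 2 / real n"
proof -
  obtain m where m: "n = Suc m" using n by (cases n) auto
  have "(\<Sum>i<n. q (Suc i mod n)) = (\<Sum>i<m. q (Suc i mod n)) + q (Suc m mod n)"
    unfolding m by simp
  also have "(\<Sum>i<m. q (Suc i mod n)) = (\<Sum>i<m. q (Suc i))" by (intro sum.cong) (auto simp: m)
  also have "q (Suc m mod n) = q 0" by (simp add: m)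
  also have "(\<Sum>i<m. q (Suc i)) + q 0 = (\<Sum>i<n. q i)"
    unfolding m by (subst sum.lessThan_Suc_shift) simp
  finally have "(\<Sum>i<n. q (Suc i mod n)) = (\<Sum>i<n. q i)" .
  then have "(\<Sum>i<n. q i + q (Suc i mod n)) = 2" using q by (simp add: sum.distrib)
  then obtain i where i: "i < n" "q i + q (Suc i mod n) \<le> 2 / real n"
    using exists_le_average[of n "\<lambda>i. q i + q (Suc i mod n)"] n by auto
  have "i \<noteq> Suc i mod n"
    using i(1) n by (cases "Suc i < n") (auto simp: mod_Suc)
  with i show ?thesis by (intro exI[of _ i] exI[of _ "Suc i mod n"]) auto
qed

lemma sqrt_mult_div_eq:
  fixes a L \<epsilon> :: real
  assumes "0 < a"
  shows "sqrt (a * L / \<epsilon>) = a * sqrt (L / (a * \<epsilon>))"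
proof -
  have "sqrt (a * L / \<epsilon>) = sqrt (a\<^sup>2 * (L / (a * \<epsilon>)))"
    using assms by (simp add: power2_eq_square)
  also have "\<dots> = a * sqrt (L / (a * \<epsilon>))" using assms by (simp only: real_sqrt_mult) simp
  finally show ?thesis .
qed

lemma chain_length_gap:
  fixes n k :: nat and L B \<epsilon> :: real
  assumes n: "0 < n" and L: "0 < L" and \<epsilon>: "0 < \<epsilon>" and k: "1 \<le> k"
    and kK: "real k \<le> B * sqrt (L / (real n * \<epsilon>)) / 3"
  shows "2 * \<epsilon> \<le> L * B\<^sup>2 / (4 * real n * (real k)\<^sup>2)"
proof -
  have "(real k)\<^sup>2 \<le> (B * sqrt (L / (real n * \<epsilon>)) / 3)\<^sup>2" using kK by (intro power_mono) auto
  also have "\<dots> = B\<^sup>2 * L / (9 * real n * \<epsilon>)"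
    using L \<epsilon> n by (simp add: power_mult_distrib power_divide)
  finally have "real n * (real k)\<^sup>2 * \<epsilon> \<le> B\<^sup>2 * L / 9" using n \<epsilon> by (simp add: field_simps)
  moreover have "0 \<le> B\<^sup>2 * L" using L by simp
  ultimately have "2 * \<epsilon> * (4 * real n * (real k)\<^sup>2) \<le> L * B\<^sup>2" by (simp add: mult.commute)
  moreover have "0 < 4 * real n * (real k)\<^sup>2" using n k by simp
  ultimately show ?thesis by (simp add: pos_le_divide_eq)
qed

lemma chain_length_queries:
  fixes n k t :: nat and L B \<epsilon> :: real
  assumes n: "0 < n" and B: "0 < B" and k: "1 \<le> k"
    and Kk: "B * sqrt (L / (real n * \<epsilon>)) / 3 \<le> 2 * real k"
    and t: "real t \<le> 1/32 * (real n + B * sqrt (real n * L / \<epsilon>))"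
  shows "real t \<le> real n * real k / 4"
proof -
  have n': "0 < real n" using n by simp
  have "real n * (B * sqrt (L / (real n * \<epsilon>))) \<le> real n * (6 * real k)"
    using Kk by (intro mult_left_mono) auto
  then have "B * sqrt (real n * L / \<epsilon>) \<le> 6 * (real n * real k)"
    unfolding sqrt_mult_div_eq[OF n'] by (simp add: algebra_simps)
  with mult_left_mono[of 1 "real k" "real n"] k
  have "real n + B * sqrt (real n * L / \<epsilon>) \<le> 7 * (real n * real k)" by simp
  with t show ?thesis by simp
qed

lemma lower_bound_long_chain:
  fixes n :: nat and L B \<epsilon> :: real
  assumes pifo: "pifo_alg n p gam alg" and n: "2 \<le> n" and L: "0 < L" and B: "0 < B" and \<epsilon>: "0 < \<epsilon>"
    and long: "3 \<le> B * sqrt (L / (real n * \<epsilon>))"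
  shows "\<exists>d F xs. real d \<le> 2 * (1 + B * sqrt (L / (real n * \<epsilon>))) \<and>
          (\<forall>i<n. L_smooth d L (F i) \<and> convex_d d (F i)) \<and>
          is_minimizer d (avg_fun n F) xs \<and> norm_d d (vsub (alg d []) xs) \<le> B \<and>
          (\<forall>t::nat. real t \<le> 1/32 * (real n + B * sqrt (real n * L / \<epsilon>)) \<longrightarrow>
             \<epsilon> \<le> expect_iter n d p F gam alg (avg_fun n F) t - avg_fun n F xs)"
proof -
  define K where "K = B * sqrt (L / (real n * \<epsilon>)) / 3"
  define k where "k = nat \<lfloor>K\<rfloor>"
  have "1 \<le> \<lfloor>K\<rfloor>" using long unfolding K_def by simp
  then have k: "1 \<le> k" "real k \<le> K" "K \<le> 2 * real k"
    unfolding k_def using floor_correct[of K] by linarith+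
  obtain i0 i1 where i: "i0 < n" "i1 < n" "i0 \<noteq> i1" and p01: "p (2*k) i0 + p (2*k) i1 \<le> 2 / real n"
    using exists_pair_le_twice_average[OF n pifo_algD(2)[OF pifo]] by blast
  define G where "G = L * B\<^sup>2 / (4 * real n * (real k)\<^sup>2)"
  obtain F xs where inst: "(\<forall>i<n. L_smooth (2*k) L (F i) \<and> convex_d (2*k) (F i))"
      "is_minimizer (2*k) (avg_fun n F) xs" "norm_d (2*k) (vsub (alg (2*k) []) xs) \<le> B"
      and gap: "\<And>t. G * (1 - real t * (p (2*k) i0 + p (2*k) i1) / real k)
        \<le> expect_iter n (2*k) p F gam alg (avg_fun n F) t - avg_fun n F xs"
    using chain_instance[OF pifo k(1) L B i] unfolding G_def by blast
  have G: "2 * \<epsilon> \<le> G" unfolding G_def using n L \<epsilon> k unfolding K_def by (intro chain_length_gap) auto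
  have "\<epsilon> \<le> expect_iter n (2*k) p F gam alg (avg_fun n F) t - avg_fun n F xs"
    if t: "real t \<le> 1/32 * (real n + B * sqrt (real n * L / \<epsilon>))" for t
  proof -
    have "real t \<le> real n * real k / 4"
      using n B k t unfolding K_def by (intro chain_length_queries) auto
    then have "real t * (p (2*k) i0 + p (2*k) i1) \<le> real n * real k / 4 * (2 / real n)"
      using p01 pifo_algD(1)[OF pifo] i by (intro mult_mono) auto
    then have "real t * (p (2*k) i0 + p (2*k) i1) / real k \<le> 1 / 2"
      using n k by (simp add: field_simps)
    then have "G * (1 / 2) \<le> G * (1 - real t * (p (2*k) i0 + p (2*k) i1) / real k)"
      using G \<epsilon> by (intro mult_left_mono) auto
    with gap[of t] G show ?thesis by linarith
  qed
  moreover have "real (2 * k) \<le> 2 * (1 + B * sqrt (L / (real n * \<epsilon>)))"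
    using k unfolding K_def by simp
  ultimately show ?thesis using inst by blast
qed

lemma lower_bound_single_link:
  fixes n :: nat and L B \<epsilon> :: real
  assumes pifo: "pifo_alg n p gam alg" and n: "2 \<le> n" and L: "0 < L" and B: "0 < B" and \<epsilon>: "0 < \<epsilon>"
    and \<epsilon>_le: "\<epsilon> \<le> L * B\<^sup>2 / 4" and short: "B * sqrt (L / (real n * \<epsilon>)) < 3"
  shows "\<exists>d F xs. real d \<le> 2 * (1 + B * sqrt (L / (real n * \<epsilon>))) \<and>
          (\<forall>i<n. L_smooth d L (F i) \<and> convex_d d (F i)) \<and>
          is_minimizer d (avg_fun n F) xs \<and> norm_d d (vsub (alg d []) xs) \<le> B \<and>
          (\<forall>t::nat. real t \<le> 1/32 * (real n + B * sqrt (real n * L / \<epsilon>)) \<longrightarrow>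
             \<epsilon> \<le> expect_iter n d p F gam alg (avg_fun n F) t - avg_fun n F xs)"
proof -
  have n0: "0 < real n" using n by simp
  obtain i0 where i0: "i0 < n" "p 2 i0 \<le> 1 / real n"
    using exists_le_average[of n "p 2"] pifo_algD(2)[OF pifo] n by auto
  obtain F xs where inst: "(\<forall>i<n. L_smooth 2 L (F i) \<and> convex_d 2 (F i))"
      "is_minimizer 2 (avg_fun n F) xs" "norm_d 2 (vsub (alg 2 []) xs) \<le> B"
      and gap: "\<And>t. L * B\<^sup>2 / 2 * (1 - real t * p 2 i0)
        \<le> expect_iter n 2 p F gam alg (avg_fun n F) t - avg_fun n F xs"
    using single_instance[OF pifo L B i0(1)] by blast
  have "\<epsilon> \<le> expect_iter n 2 p F gam alg (avg_fun n F) t - avg_fun n F xs"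
    if t: "real t \<le> 1/32 * (real n + B * sqrt (real n * L / \<epsilon>))" for t
  proof -
    have "real n * (B * sqrt (L / (real n * \<epsilon>))) \<le> real n * 3"
      using short n0 by (intro mult_left_mono) auto
    with t have "real t \<le> real n / 8" unfolding sqrt_mult_div_eq[OF n0] by (simp add: field_simps)
    then have "real t * p 2 i0 \<le> real n / 8 * (1 / real n)"
      using i0 pifo_algD(1)[OF pifo] by (intro mult_mono) auto
    then have "7 / 8 \<le> 1 - real t * p 2 i0" using n0 by simp
    then have "L * B\<^sup>2 / 2 * (7 / 8) \<le> L * B\<^sup>2 / 2 * (1 - real t * p 2 i0)"
      using L by (intro mult_left_mono) auto
    moreover have "0 \<le> L * B\<^sup>2" using L by simp
    ultimately show ?thesis using gap[of t] \<epsilon>_le by linarith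
  qed
  moreover have "real (2::nat) \<le> 2 * (1 + B * sqrt (L / (real n * \<epsilon>)))"
    using B L \<epsilon> n0 by simp
  ultimately show ?thesis using inst by blast
qed

theorem theorem3p2:
  shows "\<exists>c>0. \<exists>C>0. \<forall>(n::nat) (L::real) (B::real) (\<epsilon>::real).
     n \<ge> 2 \<and> L > 0 \<and> B > 0 \<and> \<epsilon> > 0 \<and> \<epsilon> \<le> L * B\<^sup>2 / 4 \<longrightarrow>
     (\<forall>p gam alg. pifo_alg n p gam alg \<longrightarrow>
       (\<exists>d F xs. real d \<le> C * (1 + B * sqrt (L / (real n * \<epsilon>))) \<and>
          (\<forall>i<n. L_smooth d L (F i) \<and> convex_d d (F i)) \<and>
          is_minimizer d (avg_fun n F) xs \<and>
          norm_d d (vsub (alg d []) xs) \<le> B \<and>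
          (\<forall>t::nat. real t \<le> c * (real n + B * sqrt (real n * L / \<epsilon>)) \<longrightarrow>
             expect_iter n d p F gam alg (avg_fun n F) t - avg_fun n F xs \<ge> \<epsilon>)))"
proof (rule exI[of _ "1/32"], rule conjI, simp, rule exI[of _ 2], rule conjI, simp, intro allI impI)
  fix n :: nat and L B \<epsilon> :: real and p gam alg
  assume "2 \<le> n \<and> 0 < L \<and> 0 < B \<and> 0 < \<epsilon> \<and> \<epsilon> \<le> L * B\<^sup>2 / 4" and pifo: "pifo_alg n p gam alg"
  then have params: "2 \<le> n" "0 < L" "0 < B" "0 < \<epsilon>" and \<epsilon>_le: "\<epsilon> \<le> L * B\<^sup>2 / 4" by auto
  show "\<exists>d F xs. real d \<le> 2 * (1 + B * sqrt (L / (real n * \<epsilon>))) \<and>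
          (\<forall>i<n. L_smooth d L (F i) \<and> convex_d d (F i)) \<and>
          is_minimizer d (avg_fun n F) xs \<and> norm_d d (vsub (alg d []) xs) \<le> B \<and>
          (\<forall>t::nat. real t \<le> 1/32 * (real n + B * sqrt (real n * L / \<epsilon>)) \<longrightarrow>
             \<epsilon> \<le> expect_iter n d p F gam alg (avg_fun n F) t - avg_fun n F xs)"
  proof (cases "3 \<le> B * sqrt (L / (real n * \<epsilon>))")
    case True
    then show ?thesis by (rule lower_bound_long_chain[OF pifo params])
  next
    case False
    then show ?thesis by (intro lower_bound_single_link[OF pifo params \<epsilon>_le]) simp
  qed
qed

end
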